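(* Let $L_0\in\mathbb{R}^{n\times n}$ have reduced SVD $L_0=U\Sigma V^*$, let $\Omega_{\mathrm{obs}}\subset[n]\times[n]$, $\Omega\subset\Omega_{\mathrm{obs}}$, $\Gamma=\Omega_{\mathrm{obs}}\setminus\Omega$, and let $S_0'$ be a matrix supported on $\Omega$. Assume that for every matrix $M\in\mathbb{R}^{n\times n}$, $\|\mathcal{P}_T\mathcal{P}_{\Gamma^\perp}M\|_F\le n\|\mathcal{P}_{T^\perp}\mathcal{P}_{\Gamma^\perp}M\|_F$, and take $\lambda>4/n$. Then $(L_0,S_0')$ is the unique solution of \[ \text{minimize } \|L\|_*+\lambda\|S\|_1\quad\text{subject to}\quad\mathcal{P}_{\Omega_{\mathrm{obs}}}(L+S)=\mathcal{P}_{\Omega_{\mathrm{obs}}}L_0+S_0' \] if there is a triple $(W,F,D)$ obeying \[ UV^*+W+\mathcal{P}_TD=\lambda(\mathrm{sgn}(S_0')+F), \] with $\mathcal{P}_TW=0$, $\|W\|<1/2$, $\mathcal{P}_{\Gamma^\perp}F=0$, $\|F\|_\infty<1/2$, and $\|\mathcal{P}_TD\|_F\le n^{-2}$.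
   Context: $U,V\in\mathbb{R}^{n\times r}$ have orthonormal columns; $T=\{UX^*+YV^*: X,Y\in\mathbb{R}^{n\times r}\}$, $\mathcal{P}_T$ is the orthogonal projection onto $T$ (trace inner product), $\mathcal{P}_{T^\perp}=\mathcal{I}-\mathcal{P}_T$. For an index set $A$, $\mathcal{P}_A$ keeps entries in $A$ and zeroes the rest; $\mathcal{P}_{\Gamma^\perp}=\mathcal{I}-\mathcal{P}_\Gamma$. $\|W\|$ is the spectral norm, $\|\cdot\|_F$ the Frobenius norm, $\|F\|_\infty=\max_{ij}|F_{ij}|$, $\|\cdot\|_*$ the nuclear norm, $\|S\|_1=\sum_{ij}|S_{ij}|$, $\mathrm{sgn}$ the entrywise sign with $\mathrm{sgn}(0)=0$. *)

theory Defs
  imports "Jordan_Normal_Form.Matrix"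
begin

(* Real n x n matrices are represented as Jordan_Normal_Form matrices (real mat)
   in carrier_mat n n; indices [n] are {0..<n}. *)

definition frob_inner :: "real mat \<Rightarrow> real mat \<Rightarrow> real" where
  "frob_inner A B = (\<Sum>i<dim_row A. \<Sum>j<dim_col A. A $$ (i,j) * B $$ (i,j))"

definition frob_norm :: "real mat \<Rightarrow> real" where
  "frob_norm A = sqrt (frob_inner A A)"

definition vec_norm2 :: "real vec \<Rightarrow> real" where
  "vec_norm2 x = sqrt (x \<bullet> x)"

definition spec_norm :: "real mat \<Rightarrow> real" where
  "spec_norm A = Sup {vec_norm2 (A *\<^sub>v x) | x. x \<in> carrier_vec (dim_col A) \<and> vec_norm2 x \<le> 1}"

definition max_norm :: "real mat \<Rightarrow> real" where
  "max_norm A = Max ({\<bar>A $$ (i,j)\<bar> | i j. i < dim_row A \<and> j < dim_col A} \<union> {0})"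

definition l1_norm :: "real mat \<Rightarrow> real" where
  "l1_norm A = (\<Sum>i<dim_row A. \<Sum>j<dim_col A. \<bar>A $$ (i,j)\<bar>)"

definition nuc_norm :: "real mat \<Rightarrow> real" where
  "nuc_norm A = (THE s. \<exists>U S V. U \<in> carrier_mat (dim_row A) (dim_row A)
      \<and> V \<in> carrier_mat (dim_row A) (dim_row A) \<and> S \<in> carrier_mat (dim_row A) (dim_row A)
      \<and> transpose_mat U * U = 1\<^sub>m (dim_row A) \<and> transpose_mat V * V = 1\<^sub>m (dim_row A)
      \<and> diagonal_mat S \<and> (\<forall>i<dim_row A. S $$ (i,i) \<ge> 0)
      \<and> A = U * S * transpose_mat V \<and> s = (\<Sum>i<dim_row A. S $$ (i,i)))"

definition sgn_mat :: "real mat \<Rightarrow> real mat" where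
  "sgn_mat A = map_mat sgn A"

definition proj_idx :: "(nat \<times> nat) set \<Rightarrow> real mat \<Rightarrow> real mat" where
  "proj_idx A M = mat (dim_row M) (dim_col M) (\<lambda>ij. if ij \<in> A then M $$ ij else 0)"

definition tangent_space :: "nat \<Rightarrow> nat \<Rightarrow> real mat \<Rightarrow> real mat \<Rightarrow> real mat set" where
  "tangent_space n r U V = {U * transpose_mat X + Y * transpose_mat V | X Y.
       X \<in> carrier_mat n r \<and> Y \<in> carrier_mat n r}"

definition orth_proj :: "nat \<Rightarrow> real mat set \<Rightarrow> real mat \<Rightarrow> real mat" where
  "orth_proj n S M = (THE X. X \<in> S \<and> (\<forall>Y\<in>S. frob_inner (M - X) Y = 0))"

end

theory Submission
  imports Defs "HOL-Analysis.Convex" "HOL-Computational_Algebra.Fundamental_Theorem_Algebra"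
    "Jordan_Normal_Form.Char_Poly"
begin

text \<open>Write a feasible competitor as \<open>(L\<^sub>0 + H, S\<^sub>0' + K)\<close>; feasibility says that
  \<open>H + K = 0\<close> on \<open>\<Omega>_obs\<close>. The subgradient inequality of the nuclear norm at \<open>L\<^sub>0\<close> (for the
  subgradient \<open>U V\<^sup>T + P_T\<^sup>\<bottom>(P Q\<^sup>T)\<close>, where \<open>P \<Sigma> Q\<^sup>T\<close> is an SVD of \<open>P_T\<^sup>\<bottom> H\<close>) and that of the
  l1 norm at \<open>S\<^sub>0'\<close>, combined with the certificate identity paired with \<open>H\<close>, show that the
  objective grows by at least
    \<open>(1/2 - \<parallel>W\<parallel>) \<parallel>P_T\<^sup>\<bottom> H\<parallel>_* + (\<lambda>/2 - 2/n) \<parallel>P_\<Gamma> K\<parallel>_1 + \<lambda> \<parallel>P_\<Omega>_obs\<^sup>\<bottom> K\<parallel>_1\<close>.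
  The error term \<open>\<langle>P_T D, H\<rangle>\<close> is absorbed here: by the hypothesis on \<open>T\<close> and \<open>\<Gamma>\<close>,
  \<open>\<parallel>P_T H\<parallel>_F \<le> n (\<parallel>P_T\<^sup>\<bottom> H\<parallel>_F + \<parallel>P_\<Gamma> H\<parallel>_F) + \<parallel>P_\<Gamma> H\<parallel>_F\<close>, and \<open>\<parallel>P_T D\<parallel>_F \<le> 1/n\<^sup>2\<close>.
  If the competitor is not worse, all three terms vanish; hence \<open>P_T\<^sup>\<bottom> H = 0\<close>, then \<open>P_T H = 0\<close>,
  and \<open>K\<close> vanishes on \<open>\<Omega>_obs\<close> (where \<open>K = -H\<close>) and off it.

  As the nuclear norm is defined through an SVD, real SVDs are constructed first (from a unit
  eigenvector of \<open>A\<^sup>T A\<close> and Householder deflation), and the sum of singular values is shown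
  to be the norm dual to the spectral norm, hence independent of the chosen SVD.\<close>

unbundle no inner_syntax

section \<open>Entrywise sums, the Frobenius inner product and entrywise norms\<close>

lemma index_mult_mat_sum:
  assumes "A \<in> carrier_mat n k" "B \<in> carrier_mat k m" "i < n" "j < m"
  shows "(A * B) $$ (i,j) = (\<Sum>l<k. A $$ (i,l) * B $$ (l,j))"
  using assms by (auto simp: scalar_prod_def lessThan_atLeast0)

lemma index_mult_mat_vec_sum:
  assumes "A \<in> carrier_mat n k" "x \<in> carrier_vec k" "i < n"
  shows "(A *\<^sub>v x) $ i = (\<Sum>l<k. A $$ (i,l) * x $ l)"
  using assms by (auto simp: scalar_prod_def lessThan_atLeast0)

lemma scalar_prod_sum:
  assumes "y \<in> carrier_vec k"
  shows "x \<bullet> y = (\<Sum>l<k. x $ l * y $ l)"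
  using assms by (auto simp: scalar_prod_def lessThan_atLeast0)

lemma frob_inner_sum:
  assumes "A \<in> carrier_mat n m"
  shows "frob_inner A B = (\<Sum>i<n. \<Sum>j<m. A $$ (i,j) * B $$ (i,j))"
  using assms by (auto simp: frob_inner_def)

lemma frob_inner_commute:
  assumes "A \<in> carrier_mat n m" "B \<in> carrier_mat n m"
  shows "frob_inner A B = frob_inner B A"
  using assms by (simp add: frob_inner_sum mult.commute)

lemma frob_inner_add_left:
  assumes "A \<in> carrier_mat n m" "B \<in> carrier_mat n m"
  shows "frob_inner (A + B) C = frob_inner A C + frob_inner B C"
  using assms by (simp add: frob_inner_def algebra_simps sum.distrib)

lemma frob_inner_add_right:
  assumes "A \<in> carrier_mat n m" "B \<in> carrier_mat n m" "C \<in> carrier_mat n m"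
  shows "frob_inner C (A + B) = frob_inner C A + frob_inner C B"
  using assms by (simp add: frob_inner_def algebra_simps sum.distrib)

lemma frob_inner_diff_left:
  assumes "A \<in> carrier_mat n m" "B \<in> carrier_mat n m"
  shows "frob_inner (A - B) C = frob_inner A C - frob_inner B C"
  using assms by (simp add: frob_inner_def algebra_simps sum_subtractf)

lemma frob_inner_smult_left:
  assumes "A \<in> carrier_mat n m"
  shows "frob_inner (c \<cdot>\<^sub>m A) B = c * frob_inner A B"
  using assms by (simp add: frob_inner_def algebra_simps sum_distrib_left)

lemma frob_inner_smult_right:
  assumes "A \<in> carrier_mat n m" "B \<in> carrier_mat n m"
  shows "frob_inner A (c \<cdot>\<^sub>m B) = c * frob_inner A B"
  using assms by (simp add: frob_inner_def algebra_simps sum_distrib_left)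

lemma frob_inner_zero_right:
  assumes "A \<in> carrier_mat n m"
  shows "frob_inner A (0\<^sub>m n m) = 0"
  using assms by (simp add: frob_inner_sum)

lemma frob_inner_self_nonneg: "frob_inner A A \<ge> 0"
  by (auto simp: frob_inner_def intro!: sum_nonneg)

lemma frob_inner_self_eq_0:
  assumes "A \<in> carrier_mat n m" "frob_inner A A = 0"
  shows "A = 0\<^sub>m n m"
proof (rule eq_matI)
  fix i j assume ij: "i < dim_row (0\<^sub>m n m)" "j < dim_col (0\<^sub>m n m)"
  have "(\<Sum>i<n. \<Sum>j<m. A $$ (i,j) * A $$ (i,j)) = 0" using assms by (simp add: frob_inner_sum)
  hence "\<forall>i\<in>{..<n}. (\<Sum>j<m. A $$ (i,j) * A $$ (i,j)) = 0"
    by (subst (asm) sum_nonneg_eq_0_iff) (auto intro!: sum_nonneg)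
  hence "\<forall>i\<in>{..<n}. \<forall>j\<in>{..<m}. A $$ (i,j) * A $$ (i,j) = 0"
    by (subst (asm) sum_nonneg_eq_0_iff) auto
  thus "A $$ (i,j) = 0\<^sub>m n m $$ (i,j)" using ij by auto
qed (use assms in auto)

lemma frob_inner_mult_left:
  assumes A: "A \<in> carrier_mat n k" and B: "B \<in> carrier_mat k m" and C: "C \<in> carrier_mat n m"
  shows "frob_inner (A * B) C = frob_inner B (transpose_mat A * C)"
proof -
  have "frob_inner (A * B) C = (\<Sum>i<n. \<Sum>j<m. (\<Sum>l<k. A $$ (i,l) * B $$ (l,j)) * C $$ (i,j))"
    using A B C by (simp add: frob_inner_sum[of _ n m] index_mult_mat_sum[OF A B] del: index_mult_mat)
  also have "\<dots> = (\<Sum>i<n. \<Sum>j<m. \<Sum>l<k. A $$ (i,l) * B $$ (l,j) * C $$ (i,j))"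
    by (simp add: sum_distrib_right)
  also have "\<dots> = (\<Sum>l<k. \<Sum>j<m. \<Sum>i<n. A $$ (i,l) * B $$ (l,j) * C $$ (i,j))"
    by (subst sum.swap, subst (2) sum.swap, subst sum.swap, simp)
  also have "\<dots> = (\<Sum>l<k. \<Sum>j<m. B $$ (l,j) * (\<Sum>i<n. transpose_mat A $$ (l,i) * C $$ (i,j)))"
    using A by (auto simp: sum_distrib_left intro!: sum.cong)
  also have "\<dots> = frob_inner B (transpose_mat A * C)"
    using A B C by (simp add: frob_inner_sum[OF B] index_mult_mat_sum[of _ k n _ m] del: index_mult_mat)
  finally show ?thesis .
qed

lemma frob_inner_mult_right:
  assumes A: "A \<in> carrier_mat n k" and B: "B \<in> carrier_mat k m" and C: "C \<in> carrier_mat n m"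
  shows "frob_inner (A * B) C = frob_inner A (C * transpose_mat B)"
proof -
  have "frob_inner (A * B) C = (\<Sum>i<n. \<Sum>j<m. (\<Sum>l<k. A $$ (i,l) * B $$ (l,j)) * C $$ (i,j))"
    using A B C by (simp add: frob_inner_sum[of _ n m] index_mult_mat_sum[OF A B] del: index_mult_mat)
  also have "\<dots> = (\<Sum>i<n. \<Sum>j<m. \<Sum>l<k. A $$ (i,l) * B $$ (l,j) * C $$ (i,j))"
    by (simp add: sum_distrib_right)
  also have "\<dots> = (\<Sum>i<n. \<Sum>l<k. \<Sum>j<m. A $$ (i,l) * B $$ (l,j) * C $$ (i,j))"
    by (subst (2) sum.swap, simp)
  also have "\<dots> = (\<Sum>i<n. \<Sum>l<k. A $$ (i,l) * (\<Sum>j<m. C $$ (i,j) * transpose_mat B $$ (j,l)))"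
    using B by (auto simp: sum_distrib_left intro!: sum.cong)
  also have "\<dots> = frob_inner A (C * transpose_mat B)"
    using A B C by (simp add: frob_inner_sum[OF A] index_mult_mat_sum[of _ n m _ k] del: index_mult_mat)
  finally show ?thesis .
qed

lemma frob_inner_cauchy_schwarz:
  assumes "A \<in> carrier_mat n m" "B \<in> carrier_mat n m"
  shows "\<bar>frob_inner A B\<bar> \<le> frob_norm A * frob_norm B"
proof -
  let ?I = "{..<n} \<times> {..<m}"
  have e: "\<And>X Y. X \<in> carrier_mat n m \<Longrightarrow> frob_inner X Y = (\<Sum>p\<in>?I. X $$ p * Y $$ p)"
    by (simp add: frob_inner_sum sum.cartesian_product)
  have "(frob_inner A B)\<^sup>2 \<le> (\<Sum>p\<in>?I. (A $$ p)\<^sup>2) * (\<Sum>p\<in>?I. (B $$ p)\<^sup>2)"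
    unfolding e[OF assms(1)] by (rule Cauchy_Schwarz_ineq_sum)
  also have "\<dots> = frob_inner A A * frob_inner B B"
    using assms by (simp add: e power2_eq_square)
  finally have "(frob_inner A B)\<^sup>2 \<le> frob_inner A A * frob_inner B B" .
  hence "\<bar>frob_inner A B\<bar> \<le> sqrt (frob_inner A A * frob_inner B B)"
    using real_sqrt_le_mono by fastforce
  thus ?thesis by (simp add: frob_norm_def real_sqrt_mult)
qed

lemma frob_norm_nonneg: "frob_norm A \<ge> 0"
  by (simp add: frob_norm_def frob_inner_self_nonneg)

lemma frob_norm_sq: "(frob_norm A)\<^sup>2 = frob_inner A A"
  by (simp add: frob_norm_def frob_inner_self_nonneg)

lemma frob_norm_eq_0:
  assumes "A \<in> carrier_mat n m" "frob_norm A = 0" shows "A = 0\<^sub>m n m"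
  using assms frob_inner_self_eq_0 by (simp add: frob_norm_def frob_inner_self_nonneg)

lemma frob_norm_triangle:
  assumes A: "A \<in> carrier_mat n m" and B: "B \<in> carrier_mat n m"
  shows "frob_norm (A + B) \<le> frob_norm A + frob_norm B"
proof -
  have "(frob_norm (A + B))\<^sup>2 = frob_inner A A + 2 * frob_inner A B + frob_inner B B"
    using assms by (simp add: frob_norm_sq frob_inner_add_left frob_inner_add_right frob_inner_commute[OF B A])
  also have "\<dots> \<le> (frob_norm A)\<^sup>2 + 2 * (frob_norm A * frob_norm B) + (frob_norm B)\<^sup>2"
    using frob_inner_cauchy_schwarz[OF A B] by (simp add: frob_norm_sq)
  also have "\<dots> = (frob_norm A + frob_norm B)\<^sup>2" by (simp add: power2_eq_square algebra_simps)
  finally show ?thesis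
    using frob_norm_nonneg by (meson add_nonneg_nonneg power2_le_imp_le)
qed

lemma frob_norm_uminus:
  assumes A: "A \<in> carrier_mat n m"
  shows "frob_norm (- A) = frob_norm A"
  using A by (simp add: frob_norm_def frob_inner_sum)

lemma frob_norm_diff_le:
  assumes A: "A \<in> carrier_mat n m" and B: "B \<in> carrier_mat n m"
  shows "frob_norm (A - B) \<le> frob_norm A + frob_norm B"
proof -
  have "A - B = A + (- B)" using A B by auto
  thus ?thesis using frob_norm_triangle[OF A, of "-B"] frob_norm_uminus[OF B] B by auto
qed

lemma frob_norm_smult:
  assumes A: "A \<in> carrier_mat n m"
  shows "frob_norm (c \<cdot>\<^sub>m A) = \<bar>c\<bar> * frob_norm A"
proof -
  have "frob_inner (c \<cdot>\<^sub>m A) (c \<cdot>\<^sub>m A) = c\<^sup>2 * frob_inner A A"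
    using A by (simp add: frob_inner_smult_left frob_inner_smult_right power2_eq_square)
  thus ?thesis by (simp add: frob_norm_def real_sqrt_mult)
qed

lemma frob_norm_le_l1_norm:
  assumes A: "A \<in> carrier_mat n m"
  shows "frob_norm A \<le> l1_norm A"
proof -
  let ?I = "{..<n} \<times> {..<m}"
  let ?f = "\<lambda>p. \<bar>A $$ p\<bar>"
  have fi: "frob_inner A A = (\<Sum>p\<in>?I. ?f p * ?f p)"
    using A by (simp add: frob_inner_sum sum.cartesian_product abs_mult_self)
  have l1: "l1_norm A = (\<Sum>p\<in>?I. ?f p)"
    using A by (simp add: l1_norm_def sum.cartesian_product)
  have "(\<Sum>p\<in>?I. ?f p * ?f p) \<le> (\<Sum>p\<in>?I. \<Sum>q\<in>?I. ?f p * ?f q)"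
  proof (rule sum_mono)
    fix p assume p: "p \<in> ?I"
    show "?f p * ?f p \<le> (\<Sum>q\<in>?I. ?f p * ?f q)"
      by (rule member_le_sum[where f = "\<lambda>q. ?f p * ?f q", OF p]) auto
  qed
  also have "\<dots> = (l1_norm A)\<^sup>2" unfolding l1 by (simp add: power2_eq_square sum_product)
  finally have "frob_inner A A \<le> (l1_norm A)\<^sup>2" using fi by simp
  moreover have "l1_norm A \<ge> 0" unfolding l1 by (simp add: sum_nonneg)
  ultimately show ?thesis unfolding frob_norm_def using real_sqrt_le_mono by fastforce
qed

lemma abs_index_le_max_norm:
  assumes F: "F \<in> carrier_mat n m" and i: "i < n" and j: "j < m"
  shows "\<bar>F $$ (i,j)\<bar> \<le> max_norm F"
proof -
  let ?A = "{\<bar>F $$ (i,j)\<bar> | i j. i < dim_row F \<and> j < dim_col F} \<union> {0}"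
  have "{\<bar>F $$ (i,j)\<bar> | i j. i < dim_row F \<and> j < dim_col F} \<subseteq> (\<lambda>(i,j). \<bar>F $$ (i,j)\<bar>) ` ({..<dim_row F} \<times> {..<dim_col F})"
    by auto
  hence fin: "finite ?A" by (meson finite_Un finite_SigmaI finite_imageI finite_insert finite_lessThan finite_subset finite.emptyI)
  have "\<bar>F $$ (i,j)\<bar> \<in> ?A" using F i j by auto
  thus ?thesis unfolding max_norm_def using fin by (rule Max_ge[rotated])
qed

section \<open>Vectors and the spectral norm\<close>

lemma scalar_prod_self_nonneg: "(x :: real vec) \<bullet> x \<ge> 0"
proof -
  have "x \<in> carrier_vec (dim_vec x)" by simp
  show ?thesis by (subst scalar_prod_sum[OF \<open>x \<in> carrier_vec (dim_vec x)\<close>]) (auto intro: sum_nonneg)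
qed

lemma scalar_prod_self_eq_0:
  assumes x: "(x :: real vec) \<in> carrier_vec k" and "x \<bullet> x = 0"
  shows "x = 0\<^sub>v k"
proof (rule eq_vecI)
  fix i assume i: "i < dim_vec (0\<^sub>v k)"
  have "(\<Sum>l<k. x $ l * x $ l) = 0" using assms by (simp add: scalar_prod_sum)
  hence "\<forall>l\<in>{..<k}. x $ l * x $ l = 0"
    by (subst (asm) sum_nonneg_eq_0_iff) auto
  thus "x $ i = 0\<^sub>v k $ i" using i by auto
qed (use x in auto)

lemma scalar_prod_add_self:
  assumes a: "(a :: real vec) \<in> carrier_vec n" and b: "b \<in> carrier_vec n"
  shows "(a + b) \<bullet> (a + b) = a \<bullet> a + 2 * (a \<bullet> b) + b \<bullet> b"
proof -
  have ab: "a + b \<in> carrier_vec n" using a b by simp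
  show ?thesis using a b
    by (simp add: scalar_prod_sum[OF ab] scalar_prod_sum[OF a] scalar_prod_sum[OF b] algebra_simps sum.distrib sum_distrib_left power2_eq_square)
qed

lemma scalar_prod_diff_self:
  assumes a: "(a :: real vec) \<in> carrier_vec n" and b: "b \<in> carrier_vec n"
  shows "(a - b) \<bullet> (a - b) = a \<bullet> a - 2 * (a \<bullet> b) + b \<bullet> b"
proof -
  have ab: "a - b \<in> carrier_vec n" using a b by simp
  have "(\<Sum>l<n. (a $ l - b $ l) * (a $ l - b $ l)) = (\<Sum>l<n. a $ l * a $ l) - 2 * (\<Sum>l<n. a $ l * b $ l) + (\<Sum>l<n. b $ l * b $ l)"
    by (simp add: algebra_simps sum.distrib sum_subtractf sum_distrib_left)
  thus ?thesis using a b ab by (simp add: scalar_prod_sum[OF ab] scalar_prod_sum[OF a] scalar_prod_sum[OF b])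
qed

lemma scalar_prod_mult_mat_vec_left:
  assumes U: "(U :: real mat) \<in> carrier_mat n r" and y: "y \<in> carrier_vec r" and z: "z \<in> carrier_vec n"
  shows "(U *\<^sub>v y) \<bullet> z = y \<bullet> (transpose_mat U *\<^sub>v z)"
  using transpose_vec_mult_scalar[of "transpose_mat U" r n z y] U y z by simp

lemma zero_mult_mat_vec: "z \<in> carrier_vec n \<Longrightarrow> (0\<^sub>m r n :: real mat) *\<^sub>v z = 0\<^sub>v r"
  by (intro eq_vecI) (auto simp: scalar_prod_def)

lemma sum_delta_left: "(\<Sum>k<(n::nat). (if i = k then 1 else 0) * (g k::real)) = (if i < n then g i else 0)"
proof -
  have "(\<Sum>k<n. (if i = k then 1 else 0) * g k) = (\<Sum>k<n. if i = k then g k else 0)"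
    by (rule sum.cong) auto
  thus ?thesis by simp
qed

lemma sum_delta_right: "(\<Sum>k<(n::nat). (g k::real) * (if k = j then 1 else 0)) = (if j < n then g j else 0)"
proof -
  have "(\<Sum>k<n. g k * (if k = j then 1 else 0)) = (\<Sum>k<n. if k = j then g k else 0)"
    by (rule sum.cong) auto
  thus ?thesis by simp
qed

lemma mult_mat_vec_unit_vec:
  assumes "(Q :: real mat) \<in> carrier_mat n k" "i < k"
  shows "Q *\<^sub>v unit_vec k i = col Q i"
proof (rule eq_vecI)
  fix l assume l: "l < dim_vec (col Q i)"
  hence "l < n" using assms by auto
  thus "(Q *\<^sub>v unit_vec k i) $ l = col Q i $ l"
    using assms by (simp add: index_mult_mat_vec_sum[OF assms(1)] sum_delta_right del: index_mult_mat_vec)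
qed (use assms in auto)

lemma normalize_vec_exists:
  assumes x: "(x :: real vec) \<in> carrier_vec k" "x \<noteq> 0\<^sub>v k"
  shows "\<exists>c. c > 0 \<and> (c \<cdot>\<^sub>v x) \<bullet> (c \<cdot>\<^sub>v x) = 1"
proof -
  have p: "x \<bullet> x > 0" using scalar_prod_self_eq_0[OF x(1)] x(2) scalar_prod_self_nonneg[of x]
    by force
  define c where "c = 1 / sqrt (x \<bullet> x)"
  have "(c \<cdot>\<^sub>v x) \<bullet> (c \<cdot>\<^sub>v x) = c * c * (x \<bullet> x)" using x by simp
  also have "\<dots> = 1" using p by (simp add: c_def)
  finally show ?thesis using p c_def by (intro exI[of _ c]) auto
qed

lemma vec_norm2_nonneg: "vec_norm2 x \<ge> 0"
  by (simp add: vec_norm2_def scalar_prod_self_nonneg)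

lemma vec_norm2_zero: "vec_norm2 (0\<^sub>v m) = 0"
  by (simp add: vec_norm2_def)

lemma vec_norm2_cauchy_schwarz:
  assumes "x \<in> carrier_vec k" "y \<in> carrier_vec k"
  shows "\<bar>x \<bullet> y\<bar> \<le> vec_norm2 x * vec_norm2 y"
proof -
  have "(x \<bullet> y)\<^sup>2 \<le> (\<Sum>l<k. (x $ l)\<^sup>2) * (\<Sum>l<k. (y $ l)\<^sup>2)"
    unfolding scalar_prod_sum[OF assms(2)] by (rule Cauchy_Schwarz_ineq_sum)
  also have "\<dots> = (x \<bullet> x) * (y \<bullet> y)"
    using assms by (simp add: scalar_prod_sum power2_eq_square)
  finally have "\<bar>x \<bullet> y\<bar> \<le> sqrt ((x \<bullet> x) * (y \<bullet> y))"
    using real_sqrt_le_mono by fastforce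
  thus ?thesis by (simp add: vec_norm2_def real_sqrt_mult)
qed

lemma scalar_prod_self_mult_mat_vec_le:
  assumes A: "A \<in> carrier_mat n m" and x: "x \<in> carrier_vec m"
  shows "(A *\<^sub>v x) \<bullet> (A *\<^sub>v x) \<le> frob_inner A A * (x \<bullet> x)"
proof -
  have "(A *\<^sub>v x) \<bullet> (A *\<^sub>v x) = (\<Sum>i<n. ((A *\<^sub>v x) $ i)\<^sup>2)"
    using A x by (simp add: scalar_prod_sum[of "A *\<^sub>v x" n] power2_eq_square del: index_mult_mat_vec)
  also have "\<dots> = (\<Sum>i<n. (\<Sum>l<m. A $$ (i,l) * x $ l)\<^sup>2)"
    using A x by (simp add: index_mult_mat_vec_sum[OF A x] del: index_mult_mat_vec)
  also have "\<dots> \<le> (\<Sum>i<n. (\<Sum>l<m. (A $$ (i,l))\<^sup>2) * (\<Sum>l<m. (x $ l)\<^sup>2))"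
    by (intro sum_mono Cauchy_Schwarz_ineq_sum)
  also have "\<dots> = frob_inner A A * (x \<bullet> x)"
    using A x by (simp add: frob_inner_sum scalar_prod_sum[OF x] power2_eq_square sum_distrib_right)
  finally show ?thesis .
qed

lemma vec_norm2_mult_mat_vec_le:
  assumes A: "A \<in> carrier_mat n m" and x: "x \<in> carrier_vec m"
  shows "vec_norm2 (A *\<^sub>v x) \<le> frob_norm A * vec_norm2 x"
proof -
  have "vec_norm2 (A *\<^sub>v x) \<le> sqrt (frob_inner A A * (x \<bullet> x))"
    unfolding vec_norm2_def using scalar_prod_self_mult_mat_vec_le[OF A x] real_sqrt_le_mono by blast
  thus ?thesis by (simp add: frob_norm_def vec_norm2_def real_sqrt_mult)
qed

lemma spec_norm_bdd_above:
  assumes A: "A \<in> carrier_mat n m"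
  shows "bdd_above {vec_norm2 (A *\<^sub>v x) | x. x \<in> carrier_vec (dim_col A) \<and> vec_norm2 x \<le> 1}"
proof (rule bdd_aboveI[where M = "frob_norm A"], clarify)
  fix x :: "real vec" assume x: "x \<in> carrier_vec (dim_col A)" "vec_norm2 x \<le> 1"
  have "vec_norm2 (A *\<^sub>v x) \<le> frob_norm A * vec_norm2 x"
    using A x by (intro vec_norm2_mult_mat_vec_le) auto
  also have "\<dots> \<le> frob_norm A" using x frob_norm_nonneg[of A]
    by (simp add: mult_left_le)
  finally show "vec_norm2 (A *\<^sub>v x) \<le> frob_norm A" .
qed

lemma vec_norm2_mult_mat_vec_le_spec_norm:
  assumes A: "A \<in> carrier_mat n m" and x: "x \<in> carrier_vec m" "vec_norm2 x \<le> 1"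
  shows "vec_norm2 (A *\<^sub>v x) \<le> spec_norm A"
  unfolding spec_norm_def
  by (rule cSup_upper[OF _ spec_norm_bdd_above[OF A]]) (use A x in auto)

lemma spec_norm_le:
  assumes A: "A \<in> carrier_mat n m"
    and B: "\<And>x. x \<in> carrier_vec m \<Longrightarrow> vec_norm2 x \<le> 1 \<Longrightarrow> vec_norm2 (A *\<^sub>v x) \<le> b"
  shows "spec_norm A \<le> b"
  unfolding spec_norm_def
proof (rule cSup_least)
  show "{vec_norm2 (A *\<^sub>v x) | x. x \<in> carrier_vec (dim_col A) \<and> vec_norm2 x \<le> 1} \<noteq> {}"
    using A vec_norm2_zero[of m] by (auto intro!: exI[of _ "0\<^sub>v m"])
qed (use A B in auto)

lemma spec_norm_le_frob_norm:
  assumes A: "A \<in> carrier_mat n m"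
  shows "spec_norm A \<le> frob_norm A"
proof (rule spec_norm_le[OF A])
  fix x :: "real vec" assume x: "x \<in> carrier_vec m" "vec_norm2 x \<le> 1"
  have "vec_norm2 (A *\<^sub>v x) \<le> frob_norm A * vec_norm2 x" by (rule vec_norm2_mult_mat_vec_le[OF A x(1)])
  also have "\<dots> \<le> frob_norm A" using x frob_norm_nonneg[of A] by (simp add: mult_left_le)
  finally show "vec_norm2 (A *\<^sub>v x) \<le> frob_norm A" .
qed

lemma scalar_prod_mult_mat_vec_le_spec_norm:
  assumes A: "A \<in> carrier_mat n m" and u: "u \<in> carrier_vec n" "vec_norm2 u \<le> 1"
    and v: "v \<in> carrier_vec m" "vec_norm2 v \<le> 1"
  shows "\<bar>u \<bullet> (A *\<^sub>v v)\<bar> \<le> spec_norm A"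
proof -
  have "\<bar>u \<bullet> (A *\<^sub>v v)\<bar> \<le> vec_norm2 u * vec_norm2 (A *\<^sub>v v)"
    using A u v by (intro vec_norm2_cauchy_schwarz) auto
  also have "\<dots> \<le> 1 * spec_norm A"
    using vec_norm2_mult_mat_vec_le_spec_norm[OF A v] u vec_norm2_nonneg by (intro mult_mono) auto
  finally show ?thesis by simp
qed

section \<open>Orthogonal matrices\<close>

definition orth_mat :: "nat \<Rightarrow> real mat \<Rightarrow> bool" where
  "orth_mat n Q \<longleftrightarrow> Q \<in> carrier_mat n n \<and> transpose_mat Q * Q = 1\<^sub>m n"

lemma orth_mat_transpose_mult: "orth_mat n Q \<Longrightarrow> transpose_mat Q * Q = 1\<^sub>m n"
  by (simp add: orth_mat_def)

lemma orth_mat_mult_transpose: "orth_mat n Q \<Longrightarrow> Q * transpose_mat Q = 1\<^sub>m n"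
  unfolding orth_mat_def by (metis mat_mult_left_right_inverse transpose_carrier_mat)

lemma orth_mat_transpose: "orth_mat n Q \<Longrightarrow> orth_mat n (transpose_mat Q)"
  using orth_mat_mult_transpose by (simp add: orth_mat_def)

lemma orth_mat_one: "orth_mat n (1\<^sub>m n)"
  by (simp add: orth_mat_def)

lemma orth_mat_mult:
  assumes P: "orth_mat n P" and Q: "orth_mat n Q"
  shows "orth_mat n (P * Q)"
proof -
  have Pc: "P \<in> carrier_mat n n" and Qc: "Q \<in> carrier_mat n n"
    using P Q by (auto simp: orth_mat_def)
  have "transpose_mat (P * Q) * (P * Q) = transpose_mat Q * (transpose_mat P * P) * Q"
    using Pc Qc by (simp add: transpose_mult assoc_mult_mat[of _ n n _ n _ n])
  also have "\<dots> = 1\<^sub>m n" using orth_mat_transpose_mult[OF P] orth_mat_transpose_mult[OF Q] Qc by simp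
  finally show ?thesis using Pc Qc by (simp add: orth_mat_def)
qed

lemma orth_mat_vec_norm2:
  assumes Q: "orth_mat n Q" and x: "x \<in> carrier_vec n"
  shows "vec_norm2 (Q *\<^sub>v x) = vec_norm2 x"
proof -
  have Qc: "Q \<in> carrier_mat n n" using Q by (simp add: orth_mat_def)
  have "(Q *\<^sub>v x) \<bullet> (Q *\<^sub>v x) = (transpose_mat Q *\<^sub>v (Q *\<^sub>v x)) \<bullet> x"
    using transpose_vec_mult_scalar[OF Qc x, of "Q *\<^sub>v x"] Qc x by simp
  also have "transpose_mat Q *\<^sub>v (Q *\<^sub>v x) = x"
    using Qc x orth_mat_transpose_mult[OF Q] by (simp flip: assoc_mult_mat_vec)
  finally show ?thesis by (simp add: vec_norm2_def)
qed

lemma spec_norm_orth_mult_transpose: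
  assumes P: "orth_mat n P" and Q: "orth_mat n Q"
  shows "spec_norm (P * transpose_mat Q) \<le> 1"
proof -
  have Pc: "P \<in> carrier_mat n n" and Qc: "Q \<in> carrier_mat n n" using P Q by (auto simp: orth_mat_def)
  show ?thesis
  proof (rule spec_norm_le[of _ n n])
    show "P * transpose_mat Q \<in> carrier_mat n n" using Pc Qc by simp
    fix x :: "real vec" assume x: "x \<in> carrier_vec n" "vec_norm2 x \<le> 1"
    have "(P * transpose_mat Q) *\<^sub>v x = P *\<^sub>v (transpose_mat Q *\<^sub>v x)"
      using Pc Qc x by (simp add: assoc_mult_mat_vec[of _ n n _ n])
    hence "vec_norm2 ((P * transpose_mat Q) *\<^sub>v x) = vec_norm2 x"
      using orth_mat_vec_norm2[OF P, of "transpose_mat Q *\<^sub>v x"] orth_mat_vec_norm2[OF orth_mat_transpose[OF Q] x(1)] Qc x by simp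
    thus "vec_norm2 ((P * transpose_mat Q) *\<^sub>v x) \<le> 1" using x by simp
  qed
qed

lemma orthonormal_col:
  assumes U: "(U :: real mat) \<in> carrier_mat n r" and UU: "transpose_mat U * U = 1\<^sub>m r" and i: "i < r"
  shows "col U i \<bullet> col U i = 1" "vec_norm2 (col U i) = 1" "col U i \<in> carrier_vec n"
proof -
  have "(transpose_mat U * U) $$ (i,i) = col U i \<bullet> col U i" using U i by simp
  thus 1: "col U i \<bullet> col U i = 1" using UU i by simp
  thus "vec_norm2 (col U i) = 1" by (simp add: vec_norm2_def)
  show "col U i \<in> carrier_vec n" using U unfolding carrier_vec_def by simp
qed

lemma transpose_mult_orthonormal_col:
  assumes V: "(V :: real mat) \<in> carrier_mat n r" and VV: "transpose_mat V * V = 1\<^sub>m r" and i: "i < r"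
  shows "transpose_mat V *\<^sub>v col V i = unit_vec r i"
proof (rule eq_vecI)
  fix l assume l: "l < dim_vec (unit_vec r i)"
  hence l: "l < r" by simp
  have "(transpose_mat V *\<^sub>v col V i) $ l = (transpose_mat V * V) $$ (l,i)" using V l i by simp
  thus "(transpose_mat V *\<^sub>v col V i) $ l = unit_vec r i $ l" using VV l i by simp
qed (use V in auto)

lemma col_scalar_mult_transpose_col:
  assumes U: "(U :: real mat) \<in> carrier_mat n r" and UU: "transpose_mat U * U = 1\<^sub>m r"
    and V: "V \<in> carrier_mat n r" and VV: "transpose_mat V * V = 1\<^sub>m r" and i: "i < r"
  shows "col U i \<bullet> ((U * transpose_mat V) *\<^sub>v col V i) = 1"
proof -
  have "(U * transpose_mat V) *\<^sub>v col V i = U *\<^sub>v (transpose_mat V *\<^sub>v col V i)"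
    using U V assoc_mult_mat_vec[of U n r "transpose_mat V" n "col V i"] unfolding carrier_vec_def by simp
  also have "\<dots> = col U i" using transpose_mult_orthonormal_col[OF V VV i] mult_mat_vec_unit_vec[OF U i] by simp
  finally show ?thesis using orthonormal_col[OF U UU i] by simp
qed

definition householder_mat :: "nat \<Rightarrow> real vec \<Rightarrow> real mat" where
  "householder_mat n w = mat n n (\<lambda>(i,j). (if i = j then 1 else 0) - 2 / (w \<bullet> w) * (w $ i * w $ j))"

lemma orth_mat_householder_mat:
  assumes w: "w \<in> carrier_vec n" "w \<bullet> w \<noteq> 0"
  shows "orth_mat n (householder_mat n w)"
proof -
  define c where "c = 2 / (w \<bullet> w)"
  define H where "H = householder_mat n w"
  have Hc: "H \<in> carrier_mat n n" by (simp add: H_def householder_mat_def)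
  have ccw: "c * c * (w \<bullet> w) = 2 * c" using w(2) by (simp add: c_def field_simps)
  have HT: "transpose_mat H = H" by (intro eq_matI) (auto simp: H_def householder_mat_def mult.commute)
  have "H * H = 1\<^sub>m n"
  proof (rule eq_matI)
    fix i j assume "i < dim_row (1\<^sub>m n)" "j < dim_col (1\<^sub>m n)"
    hence ij: "i < n" "j < n" by auto
    have "(H * H) $$ (i,j) = (\<Sum>k<n. ((if i = k then 1 else 0) - c * (w $ i * w $ k))
          * ((if k = j then 1 else 0) - c * (w $ k * w $ j)))"
      using ij by (subst index_mult_mat_sum[OF Hc Hc ij]) (simp add: H_def householder_mat_def c_def)
    also have "\<dots> = (\<Sum>k<n. (if i = k then 1 else 0) * ((if k = j then 1 else 0)))
       - c * w $ j * (\<Sum>k<n. (if i = k then 1 else 0) * w $ k)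
       - c * w $ i * (\<Sum>k<n. w $ k * (if k = j then 1 else 0))
       + c * c * w $ i * w $ j * (\<Sum>k<n. w $ k * w $ k)"
      unfolding sum_distrib_left sum_subtractf[symmetric] sum.distrib[symmetric]
      by (intro sum.cong refl) (auto simp: algebra_simps)
    also have "\<dots> = (if i = j then 1 else 0) - 2 * c * w $ i * w $ j + c * c * (w \<bullet> w) * w $ i * w $ j"
      using ij by (simp add: sum_delta_left sum_delta_right scalar_prod_sum[OF w(1), symmetric])
    also have "\<dots> = 1\<^sub>m n $$ (i,j)" using ij ccw by simp
    finally show "(H * H) $$ (i,j) = 1\<^sub>m n $$ (i,j)" .
  qed (auto simp: H_def householder_mat_def)
  thus ?thesis using Hc HT by (simp add: orth_mat_def H_def)
qed

text \<open>The reflection in the hyperplane orthogonal to \<open>v - e\<^sub>0\<close> swaps the unit vectors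
  \<open>e\<^sub>0\<close> and \<open>v\<close>.\<close>

lemma orth_mat_mapping_unit_vec:
  assumes v: "v \<in> carrier_vec n" "v \<bullet> v = 1" and n: "0 < n"
  shows "\<exists>H. orth_mat n H \<and> H *\<^sub>v unit_vec n 0 = v"
proof (cases "v = unit_vec n 0")
  case True
  thus ?thesis by (intro exI[of _ "1\<^sub>m n"]) (simp add: orth_mat_one)
next
  case False
  define w where "w = v - unit_vec n 0"
  have w: "w \<in> carrier_vec n" using v by (simp add: w_def)
  have wi: "\<And>i. i < n \<Longrightarrow> w $ i = v $ i - (if i = 0 then 1 else 0)"
    using v by (simp add: w_def)
  have "w \<noteq> 0\<^sub>v n"
  proof
    assume "w = 0\<^sub>v n"
    hence "v = unit_vec n 0" using v wi by (intro eq_vecI) (auto simp: w_def)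
    thus False using False by simp
  qed
  hence wpos: "w \<bullet> w > 0" using scalar_prod_self_eq_0[OF w] scalar_prod_self_nonneg[of w] by force
  have "w \<bullet> w = (\<Sum>l<n. (v $ l - (if l = 0 then 1 else 0)) * (v $ l - (if l = 0 then 1 else 0)))"
    using w wi by (simp add: scalar_prod_sum)
  also have "\<dots> = (\<Sum>l<n. v $ l * v $ l) - 2 * (\<Sum>l<n. v $ l * (if l = 0 then 1 else 0))
      + (\<Sum>l<n. (if 0 = l then 1 else 0) * (if l = 0 then 1 else 0))"
    unfolding sum_distrib_left sum_subtractf[symmetric] sum.distrib[symmetric]
    by (intro sum.cong refl) (auto simp: algebra_simps)
  also have "\<dots> = 2 - 2 * v $ 0"
    using v n by (simp add: sum_delta_right sum_delta_left scalar_prod_sum[OF v(1), symmetric])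
  finally have ww: "w \<bullet> w = 2 - 2 * v $ 0" .
  have c: "2 / (w \<bullet> w) * w $ 0 = -1"
    using wpos wi[OF n] by (simp add: ww divide_simps)
  have "householder_mat n w *\<^sub>v unit_vec n 0 = v"
  proof (rule eq_vecI)
    fix i assume "i < dim_vec v"
    hence i: "i < n" using v by auto
    have "(householder_mat n w *\<^sub>v unit_vec n 0) $ i
        = (if i = 0 then 1 else 0) - 2 / (w \<bullet> w) * (w $ i * w $ 0)"
      using i n by (simp add: householder_mat_def mult_mat_vec_unit_vec)
    also have "\<dots> = (if i = 0 then 1 else 0) - (2 / (w \<bullet> w) * w $ 0) * w $ i" by (simp only: ac_simps)
    also have "\<dots> = v $ i" unfolding c using wi[OF i] by simp
    finally show "(householder_mat n w *\<^sub>v unit_vec n 0) $ i = v $ i" .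
  qed (use v in \<open>auto simp: householder_mat_def\<close>)
  thus ?thesis using orth_mat_householder_mat[OF w] wpos by auto
qed

definition border_mat :: "real \<Rightarrow> real mat \<Rightarrow> real mat" where
  "border_mat c M = mat (Suc (dim_row M)) (Suc (dim_col M))
     (\<lambda>(i,j). if i = 0 then (if j = 0 then c else 0) else if j = 0 then 0 else M $$ (i - 1, j - 1))"

lemma border_mat_carrier: "M \<in> carrier_mat m k \<Longrightarrow> border_mat c M \<in> carrier_mat (Suc m) (Suc k)"
  by (simp add: border_mat_def)

lemma border_mat_mult:
  assumes M: "M \<in> carrier_mat m k" and N: "N \<in> carrier_mat k p"
  shows "border_mat a M * border_mat b N = border_mat (a * b) (M * N)"
proof (rule eq_matI)
  fix i j assume ij: "i < dim_row (border_mat (a * b) (M * N))" "j < dim_col (border_mat (a * b) (M * N))"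
  hence ij': "i < Suc m" "j < Suc p" using M N by (auto simp: border_mat_def)
  have "(border_mat a M * border_mat b N) $$ (i,j) = (\<Sum>l<Suc k. border_mat a M $$ (i,l) * border_mat b N $$ (l,j))"
    by (rule index_mult_mat_sum[OF border_mat_carrier[OF M] border_mat_carrier[OF N] ij'])
  also have "\<dots> = border_mat a M $$ (i,0) * border_mat b N $$ (0,j) + (\<Sum>l<k. border_mat a M $$ (i,Suc l) * border_mat b N $$ (Suc l,j))"
    by (rule sum.lessThan_Suc_shift)
  also have "\<dots> = border_mat (a * b) (M * N) $$ (i,j)"
  proof (cases i)
    case 0 thus ?thesis using M N ij' by (cases j) (auto simp: border_mat_def)
  next
    case (Suc i')
    thus ?thesis using M N ij' by (cases j) (auto simp: border_mat_def scalar_prod_def lessThan_atLeast0)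
  qed
  finally show "(border_mat a M * border_mat b N) $$ (i,j) = border_mat (a * b) (M * N) $$ (i,j)" .
qed (use M N in \<open>auto simp: border_mat_def\<close>)

lemma transpose_border_mat: "transpose_mat (border_mat c M) = border_mat c (transpose_mat M)"
  by (intro eq_matI) (auto simp: border_mat_def)

lemma border_mat_one: "border_mat 1 (1\<^sub>m m) = 1\<^sub>m (Suc m)"
  by (intro eq_matI) (auto simp: border_mat_def)

lemma orth_mat_border_mat: assumes "orth_mat m Q" shows "orth_mat (Suc m) (border_mat 1 Q)"
proof -
  have Q: "Q \<in> carrier_mat m m" using assms by (simp add: orth_mat_def)
  have "transpose_mat (border_mat 1 Q) * border_mat 1 Q = border_mat 1 (transpose_mat Q * Q)"
    using Q by (simp add: transpose_border_mat border_mat_mult[of _ m m _ m])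
  also have "\<dots> = 1\<^sub>m (Suc m)" using orth_mat_transpose_mult[OF assms] border_mat_one by simp
  finally show ?thesis using Q border_mat_carrier by (simp add: orth_mat_def)
qed

lemma diagonal_border_mat: "diagonal_mat M \<Longrightarrow> diagonal_mat (border_mat c M)"
  unfolding diagonal_mat_def
proof (intro allI impI)
  fix i j assume d: "\<forall>i<dim_row M. \<forall>j<dim_col M. i \<noteq> j \<longrightarrow> M $$ (i, j) = 0"
    and i: "i < dim_row (border_mat c M)" and j: "j < dim_col (border_mat c M)" and ij: "i \<noteq> j"
  show "border_mat c M $$ (i, j) = 0"
    using d i j ij by (cases i; cases j) (auto simp: border_mat_def)
qed

section \<open>Singular value decomposition\<close>

lemma real_symmetric_eigenvalue_real:
  fixes A :: "real mat"
  assumes A: "A \<in> carrier_mat n n" and sym: "transpose_mat A = A"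
    and ev: "eigenvector (of_real_hom.mat_hom A) v lam"
  shows "cnj lam = lam"
proof -
  define C :: "complex mat" where "C = of_real_hom.mat_hom A"
  have C: "C \<in> carrier_mat n n" using A by (simp add: C_def)
  have Cij: "\<And>i j. i < n \<Longrightarrow> j < n \<Longrightarrow> C $$ (i,j) = complex_of_real (A $$ (i,j))"
    using A by (simp add: C_def)
  have symA: "\<And>i j. i < n \<Longrightarrow> j < n \<Longrightarrow> A $$ (i,j) = A $$ (j,i)"
    using A sym by (metis carrier_matD index_transpose_mat(1))
  have v: "v \<in> carrier_vec n" "v \<noteq> 0\<^sub>v n" "C *\<^sub>v v = lam \<cdot>\<^sub>v v"
    using ev C unfolding eigenvector_def C_def by auto
  define q where "q = (\<Sum>i<n. \<Sum>j<n. cnj (v $ i) * C $$ (i,j) * v $ j)"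
  define s where "s = (\<Sum>i<n. cnj (v $ i) * v $ i)"
  have "q = (\<Sum>i<n. cnj (v $ i) * (C *\<^sub>v v) $ i)"
    unfolding q_def using C v(1)
    by (auto simp: scalar_prod_def lessThan_atLeast0 sum_distrib_left mult.assoc intro!: sum.cong)
  also have "\<dots> = lam * s" unfolding s_def using v
    by (auto simp: sum_distrib_left intro!: sum.cong)
  finally have qs: "q = lam * s" .
  have "cnj q = (\<Sum>i<n. \<Sum>j<n. v $ i * C $$ (i,j) * cnj (v $ j))"
    unfolding q_def by (simp add: Cij)
  also have "\<dots> = (\<Sum>j<n. \<Sum>i<n. v $ i * C $$ (i,j) * cnj (v $ j))"
    by (rule sum.swap)
  also have "\<dots> = q" unfolding q_def
    by (auto simp: Cij symA intro!: sum.cong)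
  finally have cq: "cnj q = q" .
  have sre: "s = complex_of_real (\<Sum>i<n. (Re (v $ i))\<^sup>2 + (Im (v $ i))\<^sup>2)"
    unfolding s_def by (simp add: complex_mult_cnj mult.commute[of "cnj _"])
  obtain i where i: "i < n" "v $ i \<noteq> 0"
    using v by (metis eq_vecI carrier_vecD index_zero_vec)
  have "(\<Sum>i<n. (Re (v $ i))\<^sup>2 + (Im (v $ i))\<^sup>2) > 0"
    by (rule sum_pos2[of _ i]) (use i in \<open>auto simp: sum_power2_gt_zero_iff complex_eq_iff\<close>)
  hence s0: "s \<noteq> 0" by (simp only: sre of_real_eq_0_iff)
  have "lam = q / s" using qs s0 by simp
  thus ?thesis using cq by (simp add: sre)
qed

lemma real_symmetric_has_eigenvector:
  fixes A :: "real mat"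
  assumes A: "A \<in> carrier_mat n n" and sym: "transpose_mat A = A" and n: "0 < n"
  shows "\<exists>\<mu> v. v \<in> carrier_vec n \<and> v \<noteq> 0\<^sub>v n \<and> A *\<^sub>v v = \<mu> \<cdot>\<^sub>v v"
proof -
  define C :: "complex mat" where "C = of_real_hom.mat_hom A"
  have C: "C \<in> carrier_mat n n" using A by (simp add: C_def)
  have cp: "char_poly C = map_poly of_real (char_poly A)"
    unfolding C_def by (rule of_real_hom.char_poly_hom[OF A])
  have "degree (char_poly C) = n" using degree_monic_char_poly[OF C] by simp
  then obtain lam where root: "poly (char_poly C) lam = 0"
    using n alg_closed_imp_poly_has_root by (metis neq0_conv)
  hence "eigenvalue C lam" using eigenvalue_root_char_poly[OF C] by simp
  then obtain v where "eigenvector C v lam" unfolding eigenvalue_def by blast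
  hence "cnj lam = lam" using real_symmetric_eigenvalue_real[OF A sym] by (simp add: C_def)
  hence "lam = of_real (Re lam)" using Reals_cnj_iff by (metis of_real_Re)
  hence "complex_of_real (poly (char_poly A) (Re lam)) = 0"
    using root cp by (metis of_real_hom.poly_map_poly)
  hence "eigenvalue A (Re lam)" using eigenvalue_root_char_poly[OF A] by simp
  then obtain w where "eigenvector A w (Re lam)" unfolding eigenvalue_def by blast
  thus ?thesis using A unfolding eigenvector_def by auto
qed

lemma real_symmetric_has_unit_eigenvector:
  fixes A :: "real mat"
  assumes A: "A \<in> carrier_mat n n" and sym: "transpose_mat A = A" and n: "0 < n"
  shows "\<exists>\<mu> v. v \<in> carrier_vec n \<and> v \<bullet> v = 1 \<and> A *\<^sub>v v = \<mu> \<cdot>\<^sub>v v"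
proof -
  obtain \<mu> v0 where v0: "v0 \<in> carrier_vec n" "v0 \<noteq> 0\<^sub>v n" "A *\<^sub>v v0 = \<mu> \<cdot>\<^sub>v v0"
    using real_symmetric_has_eigenvector[OF A sym n] by blast
  obtain c where c: "c > 0" "(c \<cdot>\<^sub>v v0) \<bullet> (c \<cdot>\<^sub>v v0) = 1" using normalize_vec_exists[OF v0(1,2)] by blast
  have "A *\<^sub>v (c \<cdot>\<^sub>v v0) = \<mu> \<cdot>\<^sub>v (c \<cdot>\<^sub>v v0)"
    using v0 A by (simp add: mult_mat_vec smult_smult_assoc mult.commute)
  thus ?thesis using v0(1) c(2) by (intro exI[of _ \<mu>] exI[of _ "c \<cdot>\<^sub>v v0"]) auto
qed

lemma transpose_unit_kernel_vec:
  fixes A :: "real mat"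
  assumes A: "A \<in> carrier_mat n n" and v: "v \<in> carrier_vec n" "v \<noteq> 0\<^sub>v n" "A *\<^sub>v v = 0\<^sub>v n"
  shows "\<exists>u. u \<in> carrier_vec n \<and> u \<bullet> u = 1 \<and> transpose_mat A *\<^sub>v u = 0\<^sub>v n"
proof -
  have "det (transpose_mat A) = 0"
    using det_0_iff_vec_prod_zero[OF A] v det_transpose[OF A] by auto
  then obtain u0 where u0: "u0 \<in> carrier_vec n" "u0 \<noteq> 0\<^sub>v n" "transpose_mat A *\<^sub>v u0 = 0\<^sub>v n"
    using det_0_iff_vec_prod_zero[of "transpose_mat A" n] A by auto
  obtain d where d: "(d \<cdot>\<^sub>v u0) \<bullet> (d \<cdot>\<^sub>v u0) = 1" using normalize_vec_exists[OF u0(1,2)] by blast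
  have "transpose_mat A *\<^sub>v (d \<cdot>\<^sub>v u0) = d \<cdot>\<^sub>v (transpose_mat A *\<^sub>v u0)"
    using u0 A by (simp add: mult_mat_vec[of _ n n])
  also have "\<dots> = 0\<^sub>v n" using u0(3) by (intro eq_vecI) auto
  finally show ?thesis using u0(1) d by (intro exI[of _ "d \<cdot>\<^sub>v u0"]) auto
qed

text \<open>A unit eigenvector \<open>v\<close> of \<open>A\<^sup>T A\<close> yields the singular pair \<open>(A v / |A v|, v)\<close>.\<close>

lemma singular_pair_exists:
  assumes A: "(A :: real mat) \<in> carrier_mat n n" and n: "0 < n"
  shows "\<exists>\<sigma> u v. \<sigma> \<ge> 0 \<and> u \<in> carrier_vec n \<and> v \<in> carrier_vec n \<and> u \<bullet> u = 1 \<and> v \<bullet> v = 1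
     \<and> A *\<^sub>v v = \<sigma> \<cdot>\<^sub>v u \<and> transpose_mat A *\<^sub>v u = \<sigma> \<cdot>\<^sub>v v"
proof -
  define B where "B = transpose_mat A * A"
  have B: "B \<in> carrier_mat n n" using A by (auto simp: B_def)
  have Bs: "transpose_mat B = B" using A transpose_mult[of "transpose_mat A" n n A n] by (simp add: B_def)
  obtain \<mu> v where v: "v \<in> carrier_vec n" "v \<bullet> v = 1" and Bv: "B *\<^sub>v v = \<mu> \<cdot>\<^sub>v v"
    using real_symmetric_has_unit_eigenvector[OF B Bs n] by blast
  show ?thesis
  proof (cases "A *\<^sub>v v = 0\<^sub>v n")
    case True
    moreover have "v \<noteq> 0\<^sub>v n" using v by auto
    ultimately obtain u where u: "u \<in> carrier_vec n" "u \<bullet> u = 1" "transpose_mat A *\<^sub>v u = 0\<^sub>v n"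
      using transpose_unit_kernel_vec[OF A v(1)] by blast
    have "(0::real) \<cdot>\<^sub>v u = 0\<^sub>v n" "(0::real) \<cdot>\<^sub>v v = 0\<^sub>v n" using u v by (auto intro!: eq_vecI)
    thus ?thesis using u v True by (intro exI[of _ 0] exI[of _ u] exI[of _ v]) auto
  next
    case False
    have Av: "A *\<^sub>v v \<in> carrier_vec n" using A v by auto
    have pos: "(A *\<^sub>v v) \<bullet> (A *\<^sub>v v) > 0"
      using scalar_prod_self_eq_0[OF Av] False scalar_prod_self_nonneg[of "A *\<^sub>v v"] by force
    define \<sigma> where "\<sigma> = sqrt ((A *\<^sub>v v) \<bullet> (A *\<^sub>v v))"
    have sp: "\<sigma> > 0" using pos by (simp add: \<sigma>_def)
    have ss: "\<sigma> * \<sigma> = (A *\<^sub>v v) \<bullet> (A *\<^sub>v v)" using pos by (simp add: \<sigma>_def)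
    define u where "u = (1 / \<sigma>) \<cdot>\<^sub>v (A *\<^sub>v v)"
    have u: "u \<in> carrier_vec n" using Av by (simp add: u_def)
    have uu: "u \<bullet> u = 1" using Av sp ss pos by (simp add: u_def)
    have Avu: "A *\<^sub>v v = \<sigma> \<cdot>\<^sub>v u" using sp Av by (simp add: u_def smult_smult_assoc)
    have "\<mu> = \<mu> * (v \<bullet> v)" using v by simp
    also have "\<dots> = v \<bullet> (B *\<^sub>v v)" using v Bv by simp
    also have "\<dots> = (transpose_mat A *\<^sub>v (A *\<^sub>v v)) \<bullet> v"
    proof -
      have "B *\<^sub>v v = transpose_mat A *\<^sub>v (A *\<^sub>v v)" using A v by (simp add: B_def)
      moreover have "B *\<^sub>v v \<in> carrier_vec n" using B v by simp
      ultimately show ?thesis using comm_scalar_prod[OF v(1), of "B *\<^sub>v v"] by simp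
    qed
    also have "\<dots> = (A *\<^sub>v v) \<bullet> (A *\<^sub>v v)"
      by (rule transpose_vec_mult_scalar[OF A v(1) Av])
    finally have mu: "\<mu> = \<sigma> * \<sigma>" using ss by simp
    have "transpose_mat A *\<^sub>v u = (1 / \<sigma>) \<cdot>\<^sub>v (B *\<^sub>v v)"
      using A v by (simp add: u_def B_def mult_mat_vec[of _ n n])
    also have "\<dots> = \<sigma> \<cdot>\<^sub>v v" using Bv mu sp by (simp add: smult_smult_assoc)
    finally show ?thesis using sp u v uu Avu
      by (intro exI[of _ \<sigma>] exI[of _ u] exI[of _ v]) auto
  qed
qed

definition is_svd :: "nat \<Rightarrow> real mat \<Rightarrow> real mat \<Rightarrow> real mat \<Rightarrow> real mat \<Rightarrow> bool" where
  "is_svd n A P S Q \<longleftrightarrow> orth_mat n P \<and> orth_mat n Q \<and> S \<in> carrier_mat n n \<and> diagonal_mat S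
     \<and> (\<forall>i<n. S $$ (i,i) \<ge> 0) \<and> A = P * S * transpose_mat Q"

lemma border_mat_if_unit_vec_eigen:
  assumes B: "(B :: real mat) \<in> carrier_mat (Suc m) (Suc m)"
    and col: "B *\<^sub>v unit_vec (Suc m) 0 = \<sigma> \<cdot>\<^sub>v unit_vec (Suc m) 0"
    and row: "transpose_mat B *\<^sub>v unit_vec (Suc m) 0 = \<sigma> \<cdot>\<^sub>v unit_vec (Suc m) 0"
  shows "B = border_mat \<sigma> (mat m m (\<lambda>(i,j). B $$ (Suc i, Suc j)))"
proof (rule eq_matI)
  fix i j assume "i < dim_row (border_mat \<sigma> (mat m m (\<lambda>(i,j). B $$ (Suc i, Suc j))))"
    "j < dim_col (border_mat \<sigma> (mat m m (\<lambda>(i,j). B $$ (Suc i, Suc j))))"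
  hence ij: "i < Suc m" "j < Suc m" by (auto simp: border_mat_def)
  have "B $$ (i,0) = (B *\<^sub>v unit_vec (Suc m) 0) $ i" "B $$ (0,j) = (transpose_mat B *\<^sub>v unit_vec (Suc m) 0) $ j"
    using B ij by (simp_all add: mult_mat_vec_unit_vec[of _ "Suc m" "Suc m"])
  hence "B $$ (i,0) = (if i = 0 then \<sigma> else 0)" "B $$ (0,j) = (if j = 0 then \<sigma> else 0)"
    using col row ij by simp_all
  thus "B $$ (i,j) = border_mat \<sigma> (mat m m (\<lambda>(i,j). B $$ (Suc i, Suc j))) $$ (i,j)"
    using ij by (cases i; cases j) (auto simp: border_mat_def)
qed (use B in \<open>auto simp: border_mat_def\<close>)

text \<open>Rotating a singular pair \<open>(u, v)\<close> of \<open>A\<close> onto the first basis vector splits off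
  one singular value.\<close>

lemma singular_pair_deflation:
  assumes A: "(A :: real mat) \<in> carrier_mat (Suc m) (Suc m)"
  shows "\<exists>H1 H2 \<sigma> B. orth_mat (Suc m) H1 \<and> orth_mat (Suc m) H2 \<and> \<sigma> \<ge> 0
    \<and> B \<in> carrier_mat m m \<and> A = H1 * border_mat \<sigma> B * transpose_mat H2"
proof -
  let ?n = "Suc m"
  define e :: "real vec" where "e = unit_vec ?n 0"
  have e: "e \<in> carrier_vec ?n" by (simp add: e_def)
  obtain \<sigma> u v where sv: "\<sigma> \<ge> 0" "u \<in> carrier_vec ?n" "v \<in> carrier_vec ?n" "u \<bullet> u = 1" "v \<bullet> v = 1"
     "A *\<^sub>v v = \<sigma> \<cdot>\<^sub>v u" "transpose_mat A *\<^sub>v u = \<sigma> \<cdot>\<^sub>v v"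
    using singular_pair_exists[OF A] by auto
  obtain H1 where H1: "orth_mat ?n H1" "H1 *\<^sub>v e = u"
    using orth_mat_mapping_unit_vec[OF sv(2,4)] by (auto simp: e_def)
  obtain H2 where H2: "orth_mat ?n H2" "H2 *\<^sub>v e = v"
    using orth_mat_mapping_unit_vec[OF sv(3,5)] by (auto simp: e_def)
  have H1c: "H1 \<in> carrier_mat ?n ?n" and H2c: "H2 \<in> carrier_mat ?n ?n"
    using H1 H2 by (auto simp: orth_mat_def)
  define B where "B = transpose_mat H1 * A * H2"
  have Bc: "B \<in> carrier_mat ?n ?n" using H1c H2c A by (simp add: B_def)
  have "B *\<^sub>v e = transpose_mat H1 *\<^sub>v (A *\<^sub>v (H2 *\<^sub>v e))"
    using H1c H2c A e by (simp add: B_def assoc_mult_mat_vec[of _ ?n ?n _ ?n])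
  also have "\<dots> = \<sigma> \<cdot>\<^sub>v (transpose_mat H1 *\<^sub>v (H1 *\<^sub>v e))"
    using H1c sv(2,6) H1(2) H2(2) by (simp add: mult_mat_vec[of _ ?n ?n])
  also have "transpose_mat H1 *\<^sub>v (H1 *\<^sub>v e) = e"
    using H1c e orth_mat_transpose_mult[OF H1(1)] by (simp flip: assoc_mult_mat_vec)
  finally have col: "B *\<^sub>v e = \<sigma> \<cdot>\<^sub>v e" .
  have "transpose_mat B = transpose_mat H2 * transpose_mat A * H1"
    using H1c H2c A by (simp add: B_def transpose_mult[of _ ?n ?n _ ?n] assoc_mult_mat[of _ ?n ?n _ ?n _ ?n])
  hence "transpose_mat B *\<^sub>v e = transpose_mat H2 *\<^sub>v (transpose_mat A *\<^sub>v (H1 *\<^sub>v e))"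
    using H1c H2c A e by (simp add: assoc_mult_mat_vec[of _ ?n ?n _ ?n])
  also have "\<dots> = \<sigma> \<cdot>\<^sub>v (transpose_mat H2 *\<^sub>v (H2 *\<^sub>v e))"
    using H2c sv(3,7) H1(2) H2(2) by (simp add: mult_mat_vec[of _ ?n ?n])
  also have "transpose_mat H2 *\<^sub>v (H2 *\<^sub>v e) = e"
    using H2c e orth_mat_transpose_mult[OF H2(1)] by (simp flip: assoc_mult_mat_vec)
  finally have row: "transpose_mat B *\<^sub>v e = \<sigma> \<cdot>\<^sub>v e" .
  have "H1 * B * transpose_mat H2 = (H1 * transpose_mat H1) * A * (H2 * transpose_mat H2)"
    using H1c H2c A by (simp add: B_def assoc_mult_mat[of _ ?n ?n _ ?n _ ?n])
  hence "A = H1 * B * transpose_mat H2"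
    using orth_mat_mult_transpose[OF H1(1)] orth_mat_mult_transpose[OF H2(1)] A by simp
  hence "A = H1 * border_mat \<sigma> (mat m m (\<lambda>(i,j). B $$ (Suc i, Suc j))) * transpose_mat H2"
    using border_mat_if_unit_vec_eigen[OF Bc col[unfolded e_def] row[unfolded e_def]] by simp
  moreover have "mat m m (\<lambda>(i,j). B $$ (Suc i, Suc j)) \<in> carrier_mat m m" by simp
  ultimately show ?thesis using H1(1) H2(1) sv(1) by blast
qed

lemma svd_exists:
  "(A :: real mat) \<in> carrier_mat n n \<Longrightarrow> \<exists>P S Q. is_svd n A P S Q"
  unfolding is_svd_def
proof (induction n arbitrary: A)
  case 0
  have "A = 1\<^sub>m 0 * 1\<^sub>m 0 * transpose_mat (1\<^sub>m 0)" using 0 by (intro eq_matI) auto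
  thus ?case by (intro exI[of _ "1\<^sub>m 0"]) (auto simp: orth_mat_one diagonal_mat_def)
next
  case (Suc m)
  let ?n = "Suc m"
  obtain H1 H2 \<sigma> B where D: "orth_mat ?n H1" "orth_mat ?n H2" "\<sigma> \<ge> 0" "B \<in> carrier_mat m m"
    "A = H1 * border_mat \<sigma> B * transpose_mat H2"
    using singular_pair_deflation[OF Suc.prems] by blast
  obtain P' S' Q' where IH: "orth_mat m P'" "orth_mat m Q'" "S' \<in> carrier_mat m m" "diagonal_mat S'"
    "\<forall>i<m. S' $$ (i,i) \<ge> 0" "B = P' * S' * transpose_mat Q'"
    using Suc.IH[OF D(4)] by blast
  have P'c: "P' \<in> carrier_mat m m" and Q'c: "Q' \<in> carrier_mat m m"
    using IH by (auto simp: orth_mat_def)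
  have H1c: "H1 \<in> carrier_mat ?n ?n" and H2c: "H2 \<in> carrier_mat ?n ?n"
    using D by (auto simp: orth_mat_def)
  define P where "P = H1 * border_mat 1 P'"
  define S where "S = border_mat \<sigma> S'"
  define Q where "Q = H2 * border_mat 1 Q'"
  have X: "border_mat 1 P' \<in> carrier_mat ?n ?n" "border_mat \<sigma> S' \<in> carrier_mat ?n ?n"
    "border_mat 1 Q' \<in> carrier_mat ?n ?n"
    using P'c Q'c IH(3) by (auto intro: border_mat_carrier)
  have "border_mat \<sigma> B = border_mat 1 P' * border_mat \<sigma> S' * transpose_mat (border_mat 1 Q')"
    using P'c Q'c IH(3) by (simp add: IH(6) transpose_border_mat border_mat_mult[of _ m m _ m])
  moreover have "P * S * transpose_mat Q
      = H1 * (border_mat 1 P' * border_mat \<sigma> S' * transpose_mat (border_mat 1 Q')) * transpose_mat H2"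
    using H1c H2c X by (simp add: P_def S_def Q_def transpose_mult[of _ ?n ?n _ ?n] assoc_mult_mat[of _ ?n ?n _ ?n _ ?n])
  ultimately have AP: "A = P * S * transpose_mat Q" using D(5) by simp
  have "orth_mat ?n P" using orth_mat_mult[OF D(1) orth_mat_border_mat[OF IH(1)]] by (simp add: P_def)
  moreover have "orth_mat ?n Q" using orth_mat_mult[OF D(2) orth_mat_border_mat[OF IH(2)]] by (simp add: Q_def)
  moreover have "S \<in> carrier_mat ?n ?n" using X by (simp add: S_def)
  moreover have "diagonal_mat S" using diagonal_border_mat[OF IH(4)] by (simp add: S_def)
  moreover have "\<forall>i<?n. S $$ (i,i) \<ge> 0"
    using D(3) IH(3,5) by (auto simp: S_def border_mat_def less_Suc_eq_0_disj)
  ultimately show ?case using AP by blast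
qed

section \<open>The nuclear norm\<close>

lemma index_mult_diagonal_transpose:
  assumes P: "P \<in> carrier_mat n k" and S: "S \<in> carrier_mat k k" and dS: "diagonal_mat S"
    and Q: "Q \<in> carrier_mat m k" and ab: "a < n" "b < m"
  shows "(P * S * transpose_mat Q) $$ (a,b) = (\<Sum>c<k. P $$ (a,c) * S $$ (c,c) * Q $$ (b,c))"
proof -
  have PS: "P * S \<in> carrier_mat n k" using P S by simp
  have "(P * S * transpose_mat Q) $$ (a,b) = (\<Sum>c<k. (P * S) $$ (a,c) * transpose_mat Q $$ (c,b))"
    using ab Q by (subst index_mult_mat_sum[OF PS, of _ m]) auto
  also have "\<dots> = (\<Sum>c<k. (\<Sum>d<k. P $$ (a,d) * S $$ (d,c)) * Q $$ (b,c))"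
    using ab Q P S by (intro sum.cong refl) (simp add: index_mult_mat_sum[OF P S] del: index_mult_mat)
  also have "\<dots> = (\<Sum>c<k. P $$ (a,c) * S $$ (c,c) * Q $$ (b,c))"
  proof (intro sum.cong refl)
    fix c assume c: "c \<in> {..<k}"
    have "(\<Sum>d<k. P $$ (a,d) * S $$ (d,c)) = (\<Sum>d<k. if d = c then P $$ (a,c) * S $$ (c,c) else 0)"
      using dS S c by (intro sum.cong refl) (auto simp: diagonal_mat_def)
    thus "(\<Sum>d<k. P $$ (a,d) * S $$ (d,c)) * Q $$ (b,c) = P $$ (a,c) * S $$ (c,c) * Q $$ (b,c)"
      using c by simp
  qed
  finally show ?thesis .
qed

lemma frob_inner_mult_diagonal:
  assumes P: "P \<in> carrier_mat n k" and S: "S \<in> carrier_mat k k" and dS: "diagonal_mat S"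
    and Q: "Q \<in> carrier_mat n k" and Z: "Z \<in> carrier_mat n n"
  shows "frob_inner Z (P * S * transpose_mat Q) = (\<Sum>i<k. S $$ (i,i) * (col P i \<bullet> (Z *\<^sub>v col Q i)))"
proof -
  note ent = index_mult_diagonal_transpose[OF P S dS Q]
  have "frob_inner Z (P * S * transpose_mat Q) = (\<Sum>a<n. \<Sum>b<n. Z $$ (a,b) * (\<Sum>c<k. P $$ (a,c) * S $$ (c,c) * Q $$ (b,c)))"
    using Z ent by (simp add: frob_inner_sum[OF Z])
  also have "\<dots> = (\<Sum>a<n. \<Sum>b<n. \<Sum>c<k. Z $$ (a,b) * P $$ (a,c) * S $$ (c,c) * Q $$ (b,c))"
    by (simp add: sum_distrib_left mult.assoc)
  also have "\<dots> = (\<Sum>c<k. \<Sum>a<n. \<Sum>b<n. Z $$ (a,b) * P $$ (a,c) * S $$ (c,c) * Q $$ (b,c))"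
    by (subst (2) sum.swap, subst sum.swap, simp)
  also have "\<dots> = (\<Sum>c<k. S $$ (c,c) * (\<Sum>a<n. P $$ (a,c) * (\<Sum>b<n. Z $$ (a,b) * Q $$ (b,c))))"
    by (simp add: sum_distrib_left algebra_simps)
  also have "\<dots> = (\<Sum>i<k. S $$ (i,i) * (col P i \<bullet> (Z *\<^sub>v col Q i)))"
  proof (intro sum.cong refl)
    fix c assume c: "c \<in> {..<k}"
    have cQ: "col Q c \<in> carrier_vec n" using Q unfolding carrier_vec_def by simp
    have "col P c \<bullet> (Z *\<^sub>v col Q c) = (\<Sum>a<n. col P c $ a * (Z *\<^sub>v col Q c) $ a)"
      using Z cQ by (intro scalar_prod_sum) simp
    also have "\<dots> = (\<Sum>a<n. P $$ (a,c) * (\<Sum>b<n. Z $$ (a,b) * Q $$ (b,c)))"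
      using P Q Z c by (intro sum.cong refl) (simp add: index_mult_mat_vec_sum[OF Z cQ] del: index_mult_mat_vec)
    finally show "S $$ (c,c) * (\<Sum>a<n. P $$ (a,c) * (\<Sum>b<n. Z $$ (a,b) * Q $$ (b,c))) = S $$ (c,c) * (col P c \<bullet> (Z *\<^sub>v col Q c))"
      by simp
  qed
  finally show ?thesis .
qed

lemma frob_inner_le_spec_norm_svd:
  assumes svd: "is_svd n A P S Q" and Z: "Z \<in> carrier_mat n n"
  shows "\<bar>frob_inner Z A\<bar> \<le> spec_norm Z * (\<Sum>i<n. S $$ (i,i))"
proof -
  have Pc: "P \<in> carrier_mat n n" and Qc: "Q \<in> carrier_mat n n" and S: "S \<in> carrier_mat n n"
    and dS: "diagonal_mat S" and Sp: "\<forall>i<n. S $$ (i,i) \<ge> 0" and A: "A = P * S * transpose_mat Q"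
    using svd by (auto simp: is_svd_def orth_mat_def)
  have "\<bar>frob_inner Z A\<bar> = \<bar>\<Sum>i<n. S $$ (i,i) * (col P i \<bullet> (Z *\<^sub>v col Q i))\<bar>"
    using frob_inner_mult_diagonal[OF Pc S dS Qc Z] A by simp
  also have "\<dots> \<le> (\<Sum>i<n. \<bar>S $$ (i,i) * (col P i \<bullet> (Z *\<^sub>v col Q i))\<bar>)" by (rule sum_abs)
  also have "\<dots> \<le> (\<Sum>i<n. S $$ (i,i) * spec_norm Z)"
  proof (intro sum_mono)
    fix i assume i: "i \<in> {..<n}"
    have "\<bar>col P i \<bullet> (Z *\<^sub>v col Q i)\<bar> \<le> spec_norm Z"
      using scalar_prod_mult_mat_vec_le_spec_norm[OF Z] orthonormal_col[OF Pc orth_mat_transpose_mult, of i] orthonormal_col[OF Qc orth_mat_transpose_mult, of i] svd i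
      by (auto simp: is_svd_def)
    thus "\<bar>S $$ (i,i) * (col P i \<bullet> (Z *\<^sub>v col Q i))\<bar> \<le> S $$ (i,i) * spec_norm Z"
      using Sp i by (simp add: abs_mult mult_left_mono)
  qed
  also have "\<dots> = spec_norm Z * (\<Sum>i<n. S $$ (i,i))" by (simp add: sum_distrib_left mult.commute)
  finally show ?thesis .
qed

lemma frob_inner_orth_factor_svd:
  assumes svd: "is_svd n A P S Q"
  shows "frob_inner (P * transpose_mat Q) A = (\<Sum>i<n. S $$ (i,i))"
proof -
  have Pc: "P \<in> carrier_mat n n" and Qc: "Q \<in> carrier_mat n n" and S: "S \<in> carrier_mat n n"
    and dS: "diagonal_mat S" and A: "A = P * S * transpose_mat Q"
    and PP: "transpose_mat P * P = 1\<^sub>m n" and QQ: "transpose_mat Q * Q = 1\<^sub>m n"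
    using svd by (auto simp: is_svd_def orth_mat_def)
  have "frob_inner (P * transpose_mat Q) A = (\<Sum>i<n. S $$ (i,i) * (col P i \<bullet> ((P * transpose_mat Q) *\<^sub>v col Q i)))"
    using frob_inner_mult_diagonal[OF Pc S dS Qc, of "P * transpose_mat Q"] A Pc Qc by simp
  also have "\<dots> = (\<Sum>i<n. S $$ (i,i))"
    using col_scalar_mult_transpose_col[OF Pc PP Qc QQ] by simp
  finally show ?thesis .
qed

lemma nuc_norm_svd:
  assumes svd: "is_svd n A P S Q"
  shows "nuc_norm A = (\<Sum>i<n. S $$ (i,i))"
proof -
  have Ac: "A \<in> carrier_mat n n" using svd by (auto simp: is_svd_def orth_mat_def)
  have le: "\<And>P1 S1 Q1 P2 S2 Q2. is_svd n A P1 S1 Q1 \<Longrightarrow> is_svd n A P2 S2 Q2 \<Longrightarrow>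
      (\<Sum>i<n. S1 $$ (i,i)) \<le> (\<Sum>i<n. S2 $$ (i,i))"
  proof -
    fix P1 S1 Q1 P2 S2 Q2 assume s1: "is_svd n A P1 S1 Q1" and s2: "is_svd n A P2 S2 Q2"
    have o: "orth_mat n P1" "orth_mat n Q1" using s1 by (auto simp: is_svd_def)
    have Zc: "P1 * transpose_mat Q1 \<in> carrier_mat n n" using o by (auto simp: orth_mat_def)
    have nn: "(\<Sum>i<n. S2 $$ (i,i)) \<ge> 0" using s2 by (auto simp: is_svd_def intro!: sum_nonneg)
    have "(\<Sum>i<n. S1 $$ (i,i)) = frob_inner (P1 * transpose_mat Q1) A" using frob_inner_orth_factor_svd[OF s1] by simp
    also have "\<dots> \<le> spec_norm (P1 * transpose_mat Q1) * (\<Sum>i<n. S2 $$ (i,i))"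
      using frob_inner_le_spec_norm_svd[OF s2 Zc] by simp
    also have "\<dots> \<le> 1 * (\<Sum>i<n. S2 $$ (i,i))"
      using spec_norm_orth_mult_transpose[OF o] nn by (intro mult_right_mono) auto
    finally show "(\<Sum>i<n. S1 $$ (i,i)) \<le> (\<Sum>i<n. S2 $$ (i,i))" by simp
  qed
  have "nuc_norm A = (THE s. \<exists>P S Q. is_svd n A P S Q \<and> s = (\<Sum>i<n. S $$ (i,i)))"
    unfolding nuc_norm_def is_svd_def orth_mat_def using Ac by (simp add: conj_ac)
  also have "\<dots> = (\<Sum>i<n. S $$ (i,i))"
  proof (rule the_equality)
    show "\<exists>P' S' Q'. is_svd n A P' S' Q' \<and> (\<Sum>i<n. S $$ (i,i)) = (\<Sum>i<n. S' $$ (i,i))"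
      using svd by blast
    fix s assume "\<exists>P' S' Q'. is_svd n A P' S' Q' \<and> s = (\<Sum>i<n. S' $$ (i,i))"
    then obtain P' S' Q' where "is_svd n A P' S' Q'" "s = (\<Sum>i<n. S' $$ (i,i))" by blast
    thus "s = (\<Sum>i<n. S $$ (i,i))" using le[OF svd] le[of P' S' Q' P S Q] svd by force
  qed
  finally show ?thesis .
qed

lemma frob_inner_le_spec_norm_nuc_norm:
  assumes A: "A \<in> carrier_mat n n" and Z: "Z \<in> carrier_mat n n"
  shows "\<bar>frob_inner Z A\<bar> \<le> spec_norm Z * nuc_norm A"
proof -
  obtain P S Q where s: "is_svd n A P S Q" using svd_exists[OF A] by blast
  show ?thesis using frob_inner_le_spec_norm_svd[OF s Z] nuc_norm_svd[OF s] by simp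
qed

lemma nuc_norm_nonneg:
  assumes A: "A \<in> carrier_mat n n" shows "nuc_norm A \<ge> 0"
proof -
  obtain P S Q where s: "is_svd n A P S Q" using svd_exists[OF A] by blast
  show ?thesis using nuc_norm_svd[OF s] s by (auto simp: is_svd_def intro!: sum_nonneg)
qed

lemma frob_norm_le_nuc_norm:
  assumes A: "A \<in> carrier_mat n n" shows "frob_norm A \<le> nuc_norm A"
proof (cases "frob_norm A = 0")
  case True thus ?thesis using nuc_norm_nonneg[OF A] by simp
next
  case False
  hence fp: "frob_norm A > 0" using frob_norm_nonneg[of A] by simp
  define Z where "Z = (1 / frob_norm A) \<cdot>\<^sub>m A"
  have Z: "Z \<in> carrier_mat n n" using A by (simp add: Z_def)
  have "spec_norm Z \<le> frob_norm Z" by (rule spec_norm_le_frob_norm[OF Z])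
  also have "\<dots> = 1" using frob_norm_smult[OF A] fp by (simp add: Z_def)
  finally have sZ: "spec_norm Z \<le> 1" .
  have "frob_inner Z A = frob_norm A"
    using A fp by (simp add: Z_def frob_inner_smult_left frob_norm_sq[symmetric] power2_eq_square)
  hence "frob_norm A \<le> spec_norm Z * nuc_norm A" using frob_inner_le_spec_norm_nuc_norm[OF A Z] by simp
  also have "\<dots> \<le> 1 * nuc_norm A" using sZ nuc_norm_nonneg[OF A] by (intro mult_right_mono) auto
  finally show ?thesis by simp
qed

section \<open>The tangent space and its orthogonal complement\<close>

definition compl_proj :: "nat \<Rightarrow> real mat \<Rightarrow> real mat" where
  "compl_proj n U = 1\<^sub>m n - U * transpose_mat U"

lemma compl_proj_carrier: "U \<in> carrier_mat n r \<Longrightarrow> compl_proj n U \<in> carrier_mat n n"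
  unfolding compl_proj_def by (rule minus_carrier_mat) auto

lemma compl_proj_sandwich_carrier: "U \<in> carrier_mat n r \<Longrightarrow> V \<in> carrier_mat n r \<Longrightarrow> M \<in> carrier_mat n n \<Longrightarrow>
  compl_proj n U * M * compl_proj n V \<in> carrier_mat n n"
  using compl_proj_carrier[of U n r] compl_proj_carrier[of V n r] by (metis mult_carrier_mat)

lemma transpose_compl_proj:
  assumes U: "U \<in> carrier_mat n r"
  shows "transpose_mat (compl_proj n U) = compl_proj n U"
proof -
  have "transpose_mat (U * transpose_mat U) = U * transpose_mat U"
    using U by (simp add: transpose_mult[of _ n r _ n])
  thus ?thesis using U by (simp add: compl_proj_def transpose_minus[of _ n n])
qed

lemma transpose_mult_compl_proj:
  assumes U: "U \<in> carrier_mat n r" and UU: "transpose_mat U * U = 1\<^sub>m r"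
  shows "transpose_mat U * compl_proj n U = 0\<^sub>m r n"
proof -
  have "transpose_mat U * compl_proj n U = transpose_mat U * 1\<^sub>m n - transpose_mat U * (U * transpose_mat U)"
    unfolding compl_proj_def using U by (intro mult_minus_distrib_mat[of _ r n]) auto
  also have "transpose_mat U * (U * transpose_mat U) = (transpose_mat U * U) * transpose_mat U"
    using U by (simp add: assoc_mult_mat[of _ r n _ r _ n])
  also have "\<dots> = transpose_mat U" using UU U by simp
  finally show ?thesis using U by simp
qed

lemma compl_proj_mult_self:
  assumes U: "U \<in> carrier_mat n r" and UU: "transpose_mat U * U = 1\<^sub>m r"
  shows "compl_proj n U * U = 0\<^sub>m n r"
proof -
  have "compl_proj n U * U = 1\<^sub>m n * U - (U * transpose_mat U) * U"
    unfolding compl_proj_def using U by (intro minus_mult_distrib_mat[of _ n n]) auto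
  also have "(U * transpose_mat U) * U = U * (transpose_mat U * U)"
    using U by (simp add: assoc_mult_mat[of _ n r _ n _ r])
  also have "\<dots> = U" using UU U by simp
  finally show ?thesis using U by simp
qed

lemma compl_proj_dim_1:
  assumes U: "U \<in> carrier_mat 1 r" and UU: "transpose_mat U * U = 1\<^sub>m r"
  shows "r = 0 \<or> compl_proj 1 U = 0\<^sub>m 1 1"
proof (cases "r = 0")
  case False
  have r0: "U $$ (0,0) * U $$ (0,0) = 1"
    using arg_cong[OF UU, of "\<lambda>A. A $$ (0,0)"] U False by (simp add: scalar_prod_def)
  have r1: "r = 1"
  proof (rule ccontr)
    assume "r \<noteq> 1" hence r2: "1 < r" using False by simp
    have a: "U $$ (0,0) * U $$ (0,1) = 0"
      using arg_cong[OF UU, of "\<lambda>A. A $$ (0,1)"] U r2 by (simp add: scalar_prod_def)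
    have b: "U $$ (0,1) * U $$ (0,1) = 1"
      using arg_cong[OF UU, of "\<lambda>A. A $$ (1,1)"] U r2 by (simp add: scalar_prod_def)
    from a r0 b show False by (metis mult_eq_0_iff zero_neq_one)
  qed
  have "compl_proj 1 U = 0\<^sub>m 1 1"
    using U r1 r0 by (intro eq_matI) (auto simp: compl_proj_def scalar_prod_def)
  thus ?thesis by simp
qed simp

definition tangent_proj :: "nat \<Rightarrow> real mat \<Rightarrow> real mat \<Rightarrow> real mat \<Rightarrow> real mat" where
  "tangent_proj n U V M = M - compl_proj n U * M * compl_proj n V"

lemma tangent_proj_carrier:
  assumes U: "U \<in> carrier_mat n r" and V: "V \<in> carrier_mat n r" and A: "A \<in> carrier_mat n n"
  shows "tangent_proj n U V A \<in> carrier_mat n n"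
  using minus_carrier_mat[OF compl_proj_sandwich_carrier[OF U V A]] by (simp add: tangent_proj_def)

lemma tangent_space_carrier:
  assumes U: "U \<in> carrier_mat n r" and V: "V \<in> carrier_mat n r" and Y: "Y \<in> tangent_space n r U V"
  shows "Y \<in> carrier_mat n n"
  using assms by (auto simp: tangent_space_def)

lemma tangent_proj_rank_0:
  assumes U: "U \<in> carrier_mat n 0" and V: "V \<in> carrier_mat n 0" and M: "M \<in> carrier_mat n n"
  shows "tangent_proj n U V M = 0\<^sub>m n n"
proof -
  have "compl_proj n U = 1\<^sub>m n" "compl_proj n V = 1\<^sub>m n" using U V
    by (auto intro!: eq_matI simp: compl_proj_def scalar_prod_def)
  thus ?thesis using M by (simp add: tangent_proj_def)
qed

lemma tangent_proj_dim_1: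
  assumes U: "U \<in> carrier_mat 1 r" and UU: "transpose_mat U * U = 1\<^sub>m r"
    and V: "V \<in> carrier_mat 1 r" and M: "M \<in> carrier_mat 1 1"
  shows "tangent_proj 1 U V M = 0\<^sub>m 1 1 \<or> compl_proj 1 U * M * compl_proj 1 V = 0\<^sub>m 1 1"
  using compl_proj_dim_1[OF U UU] tangent_proj_rank_0[of U 1 V M] U V M compl_proj_carrier[OF V]
  by auto

lemma tangent_proj_in_tangent_space:
  assumes U: "U \<in> carrier_mat n r" and V: "V \<in> carrier_mat n r" and M: "M \<in> carrier_mat n n"
  shows "tangent_proj n U V M \<in> tangent_space n r U V"
proof -
  define RU where "RU = compl_proj n U"
  have RU: "RU \<in> carrier_mat n n" using compl_proj_carrier[OF U] by (simp add: RU_def)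
  define X where "X = transpose_mat M * U"
  define Y where "Y = RU * M * V"
  have X: "X \<in> carrier_mat n r" and Y: "Y \<in> carrier_mat n r" using U V M RU by (auto simp: X_def Y_def)
  have "RU * M * compl_proj n V = RU * M * 1\<^sub>m n - RU * M * (V * transpose_mat V)"
    unfolding compl_proj_def using RU M V by (intro mult_minus_distrib_mat[of _ n n]) auto
  also have "RU * M * (V * transpose_mat V) = Y * transpose_mat V"
    unfolding Y_def by (rule assoc_mult_mat[symmetric]) (use RU M V in auto)
  finally have e1: "RU * M * compl_proj n V = RU * M - Y * transpose_mat V" using RU M by simp
  have "RU * M = 1\<^sub>m n * M - U * transpose_mat U * M"
    unfolding RU_def compl_proj_def using U M by (intro minus_mult_distrib_mat[of _ n n]) auto
  also have "U * transpose_mat U * M = U * transpose_mat X"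
    using U M by (simp add: X_def transpose_mult[of _ n n _ r] assoc_mult_mat[of _ n r _ n _ n])
  finally have e2: "RU * M = M - U * transpose_mat X" using M by simp
  have "tangent_proj n U V M = U * transpose_mat X + Y * transpose_mat V"
    unfolding tangent_proj_def RU_def[symmetric] e1 unfolding e2 using U V X Y M by (intro eq_matI) auto
  thus ?thesis using X Y by (auto simp: tangent_space_def)
qed

lemma diff_tangent_proj:
  assumes U: "U \<in> carrier_mat n r" and V: "V \<in> carrier_mat n r" and M: "M \<in> carrier_mat n n"
  shows "M - tangent_proj n U V M = compl_proj n U * M * compl_proj n V"
  using U V M by (intro eq_matI) (auto simp: tangent_proj_def compl_proj_def)

lemma frob_inner_compl_proj_sandwich:
  assumes U: "U \<in> carrier_mat n r" and V: "V \<in> carrier_mat n r"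
    and A: "A \<in> carrier_mat n n" and B: "B \<in> carrier_mat n n"
  shows "frob_inner (compl_proj n U * A * compl_proj n V) B = frob_inner A (compl_proj n U * B * compl_proj n V)"
proof -
  have RU: "compl_proj n U \<in> carrier_mat n n" and RV: "compl_proj n V \<in> carrier_mat n n"
    using compl_proj_carrier U V by auto
  have "frob_inner (compl_proj n U * A * compl_proj n V) B = frob_inner (compl_proj n U * A) (B * transpose_mat (compl_proj n V))"
    by (rule frob_inner_mult_right) (use RU RV A B in auto)
  also have "\<dots> = frob_inner A (transpose_mat (compl_proj n U) * (B * transpose_mat (compl_proj n V)))"
    by (rule frob_inner_mult_left) (use RU RV A B in auto)
  also have "transpose_mat (compl_proj n U) * (B * transpose_mat (compl_proj n V)) = compl_proj n U * B * compl_proj n V"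
    using transpose_compl_proj[OF U] transpose_compl_proj[OF V] RU RV B by (simp add: assoc_mult_mat[of _ n n _ n _ n])
  finally show ?thesis .
qed

lemma compl_proj_sandwich_diff:
  assumes U: "U \<in> carrier_mat n r" and V: "V \<in> carrier_mat n r"
    and A: "A \<in> carrier_mat n n" and B: "B \<in> carrier_mat n n"
  shows "compl_proj n U * (A - B) * compl_proj n V = compl_proj n U * A * compl_proj n V - compl_proj n U * B * compl_proj n V"
proof -
  have RU: "compl_proj n U \<in> carrier_mat n n" and RV: "compl_proj n V \<in> carrier_mat n n"
    using compl_proj_carrier U V by auto
  have "compl_proj n U * (A - B) = compl_proj n U * A - compl_proj n U * B"
    by (rule mult_minus_distrib_mat) (use RU A B in auto)
  moreover have "(compl_proj n U * A - compl_proj n U * B) * compl_proj n V = compl_proj n U * A * compl_proj n V - compl_proj n U * B * compl_proj n V"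
    by (rule minus_mult_distrib_mat) (use RU RV A B in auto)
  ultimately show ?thesis by simp
qed

lemma compl_proj_sandwich_add:
  assumes U: "U \<in> carrier_mat n r" and V: "V \<in> carrier_mat n r"
    and A: "A \<in> carrier_mat n n" and B: "B \<in> carrier_mat n n"
  shows "compl_proj n U * (A + B) * compl_proj n V
    = compl_proj n U * A * compl_proj n V + compl_proj n U * B * compl_proj n V"
proof -
  have RU: "compl_proj n U \<in> carrier_mat n n" and RV: "compl_proj n V \<in> carrier_mat n n"
    using compl_proj_carrier U V by auto
  have "compl_proj n U * (A + B) = compl_proj n U * A + compl_proj n U * B"
    by (rule mult_add_distrib_mat) (use RU A B in auto)
  moreover have "(compl_proj n U * A + compl_proj n U * B) * compl_proj n V
      = compl_proj n U * A * compl_proj n V + compl_proj n U * B * compl_proj n V"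
    by (rule add_mult_distrib_mat) (use RU RV A B in auto)
  ultimately show ?thesis by simp
qed

lemma tangent_proj_diff:
  assumes U: "U \<in> carrier_mat n r" and V: "V \<in> carrier_mat n r"
    and A: "A \<in> carrier_mat n n" and B: "B \<in> carrier_mat n n"
  shows "tangent_proj n U V (A - B) = tangent_proj n U V A - tangent_proj n U V B"
  unfolding tangent_proj_def compl_proj_sandwich_diff[OF assms] using A B compl_proj_sandwich_carrier[OF U V A] compl_proj_sandwich_carrier[OF U V B] compl_proj_carrier[OF U] compl_proj_carrier[OF V]
  by (intro eq_matI) auto

lemma compl_proj_sandwich_tangent_space:
  assumes U: "U \<in> carrier_mat n r" and UU: "transpose_mat U * U = 1\<^sub>m r"
    and V: "V \<in> carrier_mat n r" and VV: "transpose_mat V * V = 1\<^sub>m r"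
    and Y: "Y \<in> tangent_space n r U V"
  shows "compl_proj n U * Y * compl_proj n V = 0\<^sub>m n n"
proof -
  obtain X1 Y1 where XY: "X1 \<in> carrier_mat n r" "Y1 \<in> carrier_mat n r"
    "Y = U * transpose_mat X1 + Y1 * transpose_mat V"
    using Y by (auto simp: tangent_space_def)
  have RU: "compl_proj n U \<in> carrier_mat n n" and RV: "compl_proj n V \<in> carrier_mat n n"
    using compl_proj_carrier U V by auto
  have "compl_proj n U * (U * transpose_mat X1) * compl_proj n V
      = (compl_proj n U * U) * transpose_mat X1 * compl_proj n V"
    using RU U XY by (simp add: assoc_mult_mat[of _ n n _ r _ n])
  also have "\<dots> = 0\<^sub>m n n" using compl_proj_mult_self[OF U UU] XY RV by simp
  finally have 1: "compl_proj n U * (U * transpose_mat X1) * compl_proj n V = 0\<^sub>m n n" .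
  have "compl_proj n U * (Y1 * transpose_mat V) * compl_proj n V
      = compl_proj n U * Y1 * (transpose_mat V * compl_proj n V)"
    using RU RV V XY
    by (simp add: assoc_mult_mat[of _ n n _ n _ n] assoc_mult_mat[of _ n n _ r _ n] assoc_mult_mat[of _ n r _ n _ n])
  also have "\<dots> = 0\<^sub>m n n" using transpose_mult_compl_proj[OF V VV] XY RU by simp
  finally have 2: "compl_proj n U * (Y1 * transpose_mat V) * compl_proj n V = 0\<^sub>m n n" .
  show ?thesis
    using compl_proj_sandwich_add[OF U V, of "U * transpose_mat X1" "Y1 * transpose_mat V"] XY U V 1 2
    by simp
qed

lemma frob_inner_compl_tangent_space:
  assumes U: "U \<in> carrier_mat n r" and UU: "transpose_mat U * U = 1\<^sub>m r"
    and V: "V \<in> carrier_mat n r" and VV: "transpose_mat V * V = 1\<^sub>m r"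
    and M: "M \<in> carrier_mat n n" and Y: "Y \<in> tangent_space n r U V"
  shows "frob_inner (compl_proj n U * M * compl_proj n V) Y = 0"
  using frob_inner_compl_proj_sandwich[OF U V M tangent_space_carrier[OF U V Y]]
    compl_proj_sandwich_tangent_space[OF U UU V VV Y] frob_inner_zero_right[OF M] by simp

lemma tangent_space_diff:
  assumes U: "U \<in> carrier_mat n r" and V: "V \<in> carrier_mat n r"
    and A: "A \<in> tangent_space n r U V" and B: "B \<in> tangent_space n r U V"
  shows "A - B \<in> tangent_space n r U V"
proof -
  obtain X1 Y1 where 1: "X1 \<in> carrier_mat n r" "Y1 \<in> carrier_mat n r" "A = U * transpose_mat X1 + Y1 * transpose_mat V"
    using A by (auto simp: tangent_space_def)
  obtain X2 Y2 where 2: "X2 \<in> carrier_mat n r" "Y2 \<in> carrier_mat n r" "B = U * transpose_mat X2 + Y2 * transpose_mat V"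
    using B by (auto simp: tangent_space_def)
  have "U * transpose_mat (X1 - X2) = U * transpose_mat X1 - U * transpose_mat X2"
    using U 1 2 by (simp add: transpose_minus[of _ n r] mult_minus_distrib_mat[of _ n r])
  moreover have "(Y1 - Y2) * transpose_mat V = Y1 * transpose_mat V - Y2 * transpose_mat V"
    using V 1 2 by (simp add: minus_mult_distrib_mat[of _ n r])
  ultimately have "A - B = U * transpose_mat (X1 - X2) + (Y1 - Y2) * transpose_mat V"
    using U V 1 2 by (intro eq_matI) auto
  moreover have "X1 - X2 \<in> carrier_mat n r" "Y1 - Y2 \<in> carrier_mat n r"
    using 1 2 by (auto intro: minus_carrier_mat)
  ultimately show ?thesis unfolding tangent_space_def by blast
qed

lemma orth_proj_tangent_space:
  assumes U: "U \<in> carrier_mat n r" and UU: "transpose_mat U * U = 1\<^sub>m r"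
    and V: "V \<in> carrier_mat n r" and VV: "transpose_mat V * V = 1\<^sub>m r"
    and M: "M \<in> carrier_mat n n"
  shows "orth_proj n (tangent_space n r U V) M = tangent_proj n U V M"
  unfolding orth_proj_def
proof (rule the_equality)
  show "tangent_proj n U V M \<in> tangent_space n r U V \<and> (\<forall>Y\<in>tangent_space n r U V. frob_inner (M - tangent_proj n U V M) Y = 0)"
    using tangent_proj_in_tangent_space[OF U V M] frob_inner_compl_tangent_space[OF U UU V VV M] diff_tangent_proj[OF U V M] by simp
  fix X assume X: "X \<in> tangent_space n r U V \<and> (\<forall>Y\<in>tangent_space n r U V. frob_inner (M - X) Y = 0)"
  define D where "D = tangent_proj n U V M - X"
  have DT: "D \<in> tangent_space n r U V" using tangent_space_diff[OF U V tangent_proj_in_tangent_space[OF U V M]] X by (simp add: D_def)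
  have Xc: "X \<in> carrier_mat n n" using tangent_space_carrier[OF U V] X by blast
  have Pc: "tangent_proj n U V M \<in> carrier_mat n n" using tangent_space_carrier[OF U V tangent_proj_in_tangent_space[OF U V M]] .
  have Deq: "D = (M - X) - (M - tangent_proj n U V M)" using Xc Pc M by (intro eq_matI) (auto simp: D_def)
  have "frob_inner D D = frob_inner ((M - X) - (M - tangent_proj n U V M)) D"
    by (subst (1) Deq) (rule refl)
  also have "\<dots> = frob_inner (M - X) D - frob_inner (M - tangent_proj n U V M) D"
    by (rule frob_inner_diff_left) (use Xc Pc M in \<open>auto intro: minus_carrier_mat\<close>)
  also have "\<dots> = 0"
    using X DT frob_inner_compl_tangent_space[OF U UU V VV M DT] diff_tangent_proj[OF U V M] by simp
  moreover have "D \<in> carrier_mat n n" using Xc unfolding D_def by (rule minus_carrier_mat)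
  ultimately have "D = 0\<^sub>m n n" using frob_inner_self_eq_0[of D n n] by simp
  hence z: "\<And>i j. i < n \<Longrightarrow> j < n \<Longrightarrow> (tangent_proj n U V M - X) $$ (i,j) = 0" by (simp add: D_def)
  show "X = tangent_proj n U V M"
  proof (rule eq_matI)
    fix i j assume ij: "i < dim_row (tangent_proj n U V M)" "j < dim_col (tangent_proj n U V M)"
    thus "X $$ (i,j) = tangent_proj n U V M $$ (i,j)" using z[of i j] Xc Pc by auto
  qed (use Xc Pc in auto)
qed

lemma frob_norm_proj_le:
  assumes U: "U \<in> carrier_mat n r" and UU: "transpose_mat U * U = 1\<^sub>m r"
    and V: "V \<in> carrier_mat n r" and VV: "transpose_mat V * V = 1\<^sub>m r"
    and M: "M \<in> carrier_mat n n"
  shows "frob_norm (tangent_proj n U V M) \<le> frob_norm M" "frob_norm (compl_proj n U * M * compl_proj n V) \<le> frob_norm M"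
proof -
  define A where "A = tangent_proj n U V M"
  define C where "C = compl_proj n U * M * compl_proj n V"
  have Ac: "A \<in> carrier_mat n n" using tangent_proj_carrier[OF U V M] by (simp add: A_def)
  have Cc: "C \<in> carrier_mat n n" using compl_proj_sandwich_carrier[OF U V M] by (simp add: C_def)
  have MAC: "M = A + C" using Ac Cc M by (intro eq_matI) (auto simp: A_def C_def tangent_proj_def)
  have o: "frob_inner C A = 0" unfolding C_def A_def by (rule frob_inner_compl_tangent_space[OF U UU V VV M tangent_proj_in_tangent_space[OF U V M]])
  have "frob_inner M M = frob_inner A A + 2 * frob_inner A C + frob_inner C C"
    unfolding MAC using Ac Cc by (simp add: frob_inner_add_left[of _ n n] frob_inner_add_right[of _ n n] frob_inner_commute[OF Cc Ac])
  hence e: "frob_inner M M = frob_inner A A + frob_inner C C" using o frob_inner_commute[OF Cc Ac] by simp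
  have "frob_inner A A \<le> frob_inner M M" "frob_inner C C \<le> frob_inner M M"
    using e frob_inner_self_nonneg[of A] frob_inner_self_nonneg[of C] by linarith+
  thus "frob_norm (tangent_proj n U V M) \<le> frob_norm M" "frob_norm (compl_proj n U * M * compl_proj n V) \<le> frob_norm M"
    unfolding frob_norm_def A_def C_def by (auto intro: real_sqrt_le_mono)
qed

lemma compl_proj_sandwich_svd_factor:
  assumes U: "U \<in> carrier_mat n r" and UU: "transpose_mat U * U = 1\<^sub>m r"
    and V: "V \<in> carrier_mat n r" and Sig: "Sig \<in> carrier_mat r r"
  shows "compl_proj n U * (U * Sig * transpose_mat V) * compl_proj n V = 0\<^sub>m n n"
proof -
  have RU: "compl_proj n U \<in> carrier_mat n n" and RV: "compl_proj n V \<in> carrier_mat n n"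
    using compl_proj_carrier U V by auto
  have "compl_proj n U * (U * Sig * transpose_mat V) = (compl_proj n U * U) * Sig * transpose_mat V"
    using RU U Sig V by (simp add: assoc_mult_mat[of _ n n _ r _ r] assoc_mult_mat[of _ n r _ r _ n]
        assoc_mult_mat[of _ n n _ r _ n])
  also have "\<dots> = 0\<^sub>m n n" using compl_proj_mult_self[OF U UU] Sig V by simp
  finally show ?thesis using RV by simp
qed

lemma compl_proj_mult_vec:
  assumes U: "(U :: real mat) \<in> carrier_mat n r" and z: "z \<in> carrier_vec n"
  shows "compl_proj n U *\<^sub>v z = z - U *\<^sub>v (transpose_mat U *\<^sub>v z)"
proof -
  have "compl_proj n U *\<^sub>v z = 1\<^sub>m n *\<^sub>v z - (U * transpose_mat U) *\<^sub>v z"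
    unfolding compl_proj_def using U z by (intro minus_mult_distrib_mat_vec) auto
  thus ?thesis using U z by (simp add: assoc_mult_mat_vec[of _ n r _ n])
qed

lemma scalar_prod_compl_proj_self:
  assumes U: "(U :: real mat) \<in> carrier_mat n r" and UU: "transpose_mat U * U = 1\<^sub>m r" and z: "z \<in> carrier_vec n"
  shows "(compl_proj n U *\<^sub>v z) \<bullet> (compl_proj n U *\<^sub>v z) = z \<bullet> z - (transpose_mat U *\<^sub>v z) \<bullet> (transpose_mat U *\<^sub>v z)"
    and "(compl_proj n U *\<^sub>v z) \<bullet> (compl_proj n U *\<^sub>v z) \<le> z \<bullet> z"
proof -
  define w where "w = transpose_mat U *\<^sub>v z"
  have w: "w \<in> carrier_vec r" using U z by (simp add: w_def)
  define p where "p = U *\<^sub>v w"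
  have p: "p \<in> carrier_vec n" using U w by (simp add: p_def)
  have pz: "p \<bullet> z = w \<bullet> w" unfolding p_def using scalar_prod_mult_mat_vec_left[OF U w z] by (simp add: w_def)
  have "transpose_mat U *\<^sub>v p = w"
    unfolding p_def using U w UU by (simp flip: assoc_mult_mat_vec)
  hence pp: "p \<bullet> p = w \<bullet> w" using scalar_prod_mult_mat_vec_left[OF U w p] by (simp add: p_def)
  have zp: "z \<bullet> p = p \<bullet> z" using comm_scalar_prod[OF z p] .
  have "(compl_proj n U *\<^sub>v z) \<bullet> (compl_proj n U *\<^sub>v z) = (z - p) \<bullet> (z - p)"
    using compl_proj_mult_vec[OF U z] by (simp add: p_def w_def)
  also have "\<dots> = z \<bullet> z - w \<bullet> w" using scalar_prod_diff_self[OF z p] pz pp zp by simp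
  finally show 1: "(compl_proj n U *\<^sub>v z) \<bullet> (compl_proj n U *\<^sub>v z) = z \<bullet> z - (transpose_mat U *\<^sub>v z) \<bullet> (transpose_mat U *\<^sub>v z)"
    by (simp add: w_def)
  show "(compl_proj n U *\<^sub>v z) \<bullet> (compl_proj n U *\<^sub>v z) \<le> z \<bullet> z"
    using 1 scalar_prod_self_nonneg[of "transpose_mat U *\<^sub>v z"] by simp
qed

lemma scalar_prod_range_compl_proj:
  assumes U: "(U :: real mat) \<in> carrier_mat n r" and UU: "transpose_mat U * U = 1\<^sub>m r"
    and y: "y \<in> carrier_vec r" and z: "z \<in> carrier_vec n"
  shows "(U *\<^sub>v y) \<bullet> (compl_proj n U *\<^sub>v z) = 0"
proof -
  have Rz: "compl_proj n U *\<^sub>v z \<in> carrier_vec n" using compl_proj_carrier[OF U] z by simp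
  have "transpose_mat U *\<^sub>v (compl_proj n U *\<^sub>v z) = (transpose_mat U * compl_proj n U) *\<^sub>v z"
    using U z compl_proj_carrier[OF U] by (simp add: assoc_mult_mat_vec[of _ r n _ n])
  also have "\<dots> = 0\<^sub>v r" using transpose_mult_compl_proj[OF U UU] z zero_mult_mat_vec by simp
  finally show ?thesis using scalar_prod_mult_mat_vec_left[OF U y Rz] y by simp
qed

lemma scalar_prod_self_range_add_compl_le:
  assumes U: "(U :: real mat) \<in> carrier_mat n r" and UU: "transpose_mat U * U = 1\<^sub>m r"
    and y: "y \<in> carrier_vec r" and z: "z \<in> carrier_vec n"
  shows "(U *\<^sub>v y + compl_proj n U *\<^sub>v z) \<bullet> (U *\<^sub>v y + compl_proj n U *\<^sub>v z) \<le> y \<bullet> y + z \<bullet> z"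
proof -
  have Uy: "U *\<^sub>v y \<in> carrier_vec n" and Rz: "compl_proj n U *\<^sub>v z \<in> carrier_vec n"
    using U y z compl_proj_carrier[OF U] by auto
  have "transpose_mat U *\<^sub>v (U *\<^sub>v y) = y" using U y UU by (simp flip: assoc_mult_mat_vec)
  hence "(U *\<^sub>v y) \<bullet> (U *\<^sub>v y) = y \<bullet> y" using scalar_prod_mult_mat_vec_left[OF U y Uy] by simp
  thus ?thesis
    using scalar_prod_add_self[OF Uy Rz] scalar_prod_range_compl_proj[OF U UU y z]
      scalar_prod_compl_proj_self(2)[OF U UU z] by simp
qed

section \<open>Subgradients of the nuclear norm and the l1 norm\<close>

lemma spec_norm_subgradient_le_1:
  assumes U: "(U :: real mat) \<in> carrier_mat n r" and UU: "transpose_mat U * U = 1\<^sub>m r"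
    and V: "V \<in> carrier_mat n r" and VV: "transpose_mat V * V = 1\<^sub>m r"
    and P: "orth_mat n P" and Q: "orth_mat n Q"
  shows "spec_norm (U * transpose_mat V + compl_proj n U * (P * transpose_mat Q) * compl_proj n V) \<le> 1"
proof -
  have Pc: "P \<in> carrier_mat n n" and Qc: "Q \<in> carrier_mat n n" using P Q by (auto simp: orth_mat_def)
  have RU: "compl_proj n U \<in> carrier_mat n n" and RV: "compl_proj n V \<in> carrier_mat n n"
    using compl_proj_carrier U V by auto
  have PQ: "P * transpose_mat Q \<in> carrier_mat n n" using Pc Qc by simp
  have Zc: "U * transpose_mat V + compl_proj n U * (P * transpose_mat Q) * compl_proj n V \<in> carrier_mat n n"
    using U V RU RV PQ by (intro add_carrier_mat) (auto intro!: mult_carrier_mat)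
  show ?thesis
  proof (rule spec_norm_le[OF Zc])
    fix x :: "real vec" assume x: "x \<in> carrier_vec n" "vec_norm2 x \<le> 1"
    define y where "y = transpose_mat V *\<^sub>v x"
    define x' where "x' = compl_proj n V *\<^sub>v x"
    define z where "z = (P * transpose_mat Q) *\<^sub>v x'"
    have y: "y \<in> carrier_vec r" and x': "x' \<in> carrier_vec n" and z: "z \<in> carrier_vec n"
      using V x RV PQ by (auto simp: y_def x'_def z_def)
    have Zx: "(U * transpose_mat V + compl_proj n U * (P * transpose_mat Q) * compl_proj n V) *\<^sub>v x
        = U *\<^sub>v y + compl_proj n U *\<^sub>v z"
    proof -
      have "(U * transpose_mat V + compl_proj n U * (P * transpose_mat Q) * compl_proj n V) *\<^sub>v x
          = (U * transpose_mat V) *\<^sub>v x + (compl_proj n U * (P * transpose_mat Q) * compl_proj n V) *\<^sub>v x"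
        by (rule add_mult_distrib_mat_vec) (use U V RU RV PQ x Pc Qc in \<open>auto intro!: mult_carrier_mat\<close>)
      also have "(U * transpose_mat V) *\<^sub>v x = U *\<^sub>v y"
        unfolding y_def using U V x by (simp add: assoc_mult_mat_vec[of _ n r _ n])
      also have "(compl_proj n U * (P * transpose_mat Q) * compl_proj n V) *\<^sub>v x = compl_proj n U *\<^sub>v z"
        unfolding z_def x'_def using RU RV PQ x
        by (simp add: assoc_mult_mat_vec[of _ n n _ n] del: assoc_mult_mat)
      finally show ?thesis .
    qed
    have zz: "z \<bullet> z = x' \<bullet> x'"
      using orth_mat_vec_norm2[OF P, of "transpose_mat Q *\<^sub>v x'"] orth_mat_vec_norm2[OF orth_mat_transpose[OF Q] x'] Pc Qc x'
      unfolding z_def vec_norm2_def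
      by (simp add: assoc_mult_mat_vec[of _ n n _ n] scalar_prod_self_nonneg)
    have xx: "x' \<bullet> x' = x \<bullet> x - y \<bullet> y"
      using scalar_prod_compl_proj_self(1)[OF V VV x(1)] by (simp add: x'_def y_def)
    have "(U *\<^sub>v y + compl_proj n U *\<^sub>v z) \<bullet> (U *\<^sub>v y + compl_proj n U *\<^sub>v z) \<le> y \<bullet> y + z \<bullet> z"
      by (rule scalar_prod_self_range_add_compl_le[OF U UU y z])
    also have "\<dots> = x \<bullet> x" using zz xx by simp
    finally have "(U *\<^sub>v y + compl_proj n U *\<^sub>v z) \<bullet> (U *\<^sub>v y + compl_proj n U *\<^sub>v z) \<le> x \<bullet> x" .
    hence "vec_norm2 (U *\<^sub>v y + compl_proj n U *\<^sub>v z) \<le> vec_norm2 x"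
      unfolding vec_norm2_def by (rule real_sqrt_le_mono)
    thus "vec_norm2 ((U * transpose_mat V + compl_proj n U * (P * transpose_mat Q) * compl_proj n V) *\<^sub>v x) \<le> 1"
      using Zx x by simp
  qed
qed

lemma frob_inner_svd_factor:
  assumes U: "U \<in> carrier_mat n r" and UU: "transpose_mat U * U = 1\<^sub>m r"
    and V: "V \<in> carrier_mat n r" and VV: "transpose_mat V * V = 1\<^sub>m r"
    and Sig: "Sig \<in> carrier_mat r r" "diagonal_mat Sig"
  shows "frob_inner (U * transpose_mat V) (U * Sig * transpose_mat V) = (\<Sum>i<r. Sig $$ (i,i))"
proof -
  have "U * transpose_mat V \<in> carrier_mat n n" using U V by simp
  thus ?thesis
    using frob_inner_mult_diagonal[OF U Sig V] col_scalar_mult_transpose_col[OF U UU V VV] by simp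
qed

lemma nuc_norm_reduced_svd_le:
  assumes U: "U \<in> carrier_mat n r" and UU: "transpose_mat U * U = 1\<^sub>m r"
    and V: "V \<in> carrier_mat n r" and VV: "transpose_mat V * V = 1\<^sub>m r"
    and Sig: "Sig \<in> carrier_mat r r" "diagonal_mat Sig" "\<forall>i<r. Sig $$ (i,i) \<ge> 0"
  shows "nuc_norm (U * Sig * transpose_mat V) \<le> (\<Sum>i<r. Sig $$ (i,i))"
proof -
  have L0: "U * Sig * transpose_mat V \<in> carrier_mat n n" using U V Sig by simp
  obtain P S Q where s: "is_svd n (U * Sig * transpose_mat V) P S Q" using svd_exists[OF L0] by blast
  have o: "orth_mat n P" "orth_mat n Q" using s by (auto simp: is_svd_def)
  have Zc: "P * transpose_mat Q \<in> carrier_mat n n" using o by (auto simp: orth_mat_def)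
  have "nuc_norm (U * Sig * transpose_mat V) = frob_inner (P * transpose_mat Q) (U * Sig * transpose_mat V)"
    using nuc_norm_svd[OF s] frob_inner_orth_factor_svd[OF s] by simp
  also have "\<dots> = (\<Sum>i<r. Sig $$ (i,i) * (col U i \<bullet> ((P * transpose_mat Q) *\<^sub>v col V i)))"
    using frob_inner_mult_diagonal[OF U Sig(1,2) V Zc] by simp
  also have "\<dots> \<le> (\<Sum>i<r. Sig $$ (i,i))"
  proof (rule sum_mono)
    fix i assume i: "i \<in> {..<r}"
    have "\<bar>col U i \<bullet> ((P * transpose_mat Q) *\<^sub>v col V i)\<bar> \<le> spec_norm (P * transpose_mat Q)"
      using scalar_prod_mult_mat_vec_le_spec_norm[OF Zc] orthonormal_col[OF U UU, of i]
        orthonormal_col[OF V VV, of i] i by auto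
    also have "\<dots> \<le> 1" by (rule spec_norm_orth_mult_transpose[OF o])
    finally have "col U i \<bullet> ((P * transpose_mat Q) *\<^sub>v col V i) \<le> 1" by simp
    thus "Sig $$ (i,i) * (col U i \<bullet> ((P * transpose_mat Q) *\<^sub>v col V i)) \<le> Sig $$ (i,i)"
      using Sig(3) i by (simp add: mult_left_le)
  qed
  finally show ?thesis .
qed

text \<open>The subgradient \<open>U V\<^sup>T + P\<^sub>U\<^sub>\<bottom> P Q\<^sup>T P\<^sub>V\<^sub>\<bottom>\<close> of the nuclear norm at \<open>L\<^sub>0\<close>
  is built from an SVD \<open>P S Q\<^sup>T\<close> of the component of \<open>H\<close> in \<open>T\<^sup>\<bottom>\<close>.\<close>

lemma nuc_norm_subgradient:
  assumes U: "U \<in> carrier_mat n r" and UU: "transpose_mat U * U = 1\<^sub>m r"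
    and V: "V \<in> carrier_mat n r" and VV: "transpose_mat V * V = 1\<^sub>m r"
    and Sig: "Sig \<in> carrier_mat r r" "diagonal_mat Sig" "\<forall>i<r. Sig $$ (i,i) \<ge> 0"
    and H: "H \<in> carrier_mat n n"
  shows "nuc_norm (U * Sig * transpose_mat V) + frob_inner (U * transpose_mat V) H
           + nuc_norm (compl_proj n U * H * compl_proj n V)
         \<le> nuc_norm (U * Sig * transpose_mat V + H)"
proof -
  define L0 where "L0 = U * Sig * transpose_mat V"
  define X where "X = compl_proj n U * H * compl_proj n V"
  have L0c: "L0 \<in> carrier_mat n n" using U V Sig by (simp add: L0_def)
  have Lc: "L0 + H \<in> carrier_mat n n" using L0c H by simp
  have Xc: "X \<in> carrier_mat n n" using compl_proj_sandwich_carrier[OF U V H] by (simp add: X_def)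
  have UVc: "U * transpose_mat V \<in> carrier_mat n n" using U V by simp
  obtain P S Q where svdX: "is_svd n X P S Q" using svd_exists[OF Xc] by blast
  have oP: "orth_mat n P" and oQ: "orth_mat n Q" using svdX by (auto simp: is_svd_def)
  have PQc: "P * transpose_mat Q \<in> carrier_mat n n" using oP oQ by (auto simp: orth_mat_def)
  define Y where "Y = compl_proj n U * (P * transpose_mat Q) * compl_proj n V"
  have Yc: "Y \<in> carrier_mat n n" using compl_proj_sandwich_carrier[OF U V PQc] by (simp add: Y_def)
  have "frob_inner (U * transpose_mat V + Y) (L0 + H) \<le> spec_norm (U * transpose_mat V + Y) * nuc_norm (L0 + H)"
    using frob_inner_le_spec_norm_nuc_norm[OF Lc, of "U * transpose_mat V + Y"] UVc Yc by simp
  also have "\<dots> \<le> nuc_norm (L0 + H)"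
    using mult_right_mono[OF spec_norm_subgradient_le_1[OF U UU V VV oP oQ] nuc_norm_nonneg[OF Lc]]
    by (simp add: Y_def)
  finally have dual: "frob_inner (U * transpose_mat V + Y) (L0 + H) \<le> nuc_norm (L0 + H)" .
  have "frob_inner Y (L0 + H) = frob_inner (P * transpose_mat Q) (compl_proj n U * (L0 + H) * compl_proj n V)"
    unfolding Y_def by (rule frob_inner_compl_proj_sandwich[OF U V PQc Lc])
  also have "compl_proj n U * (L0 + H) * compl_proj n V = X"
    using compl_proj_sandwich_add[OF U V L0c H] compl_proj_sandwich_svd_factor[OF U UU V Sig(1)] Xc
    by (simp add: L0_def X_def)
  also have "frob_inner (P * transpose_mat Q) X = nuc_norm X"
    using frob_inner_orth_factor_svd[OF svdX] nuc_norm_svd[OF svdX] by simp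
  finally have "frob_inner Y (L0 + H) = nuc_norm X" .
  moreover have "frob_inner (U * transpose_mat V) (L0 + H)
      = frob_inner (U * transpose_mat V) L0 + frob_inner (U * transpose_mat V) H"
    by (rule frob_inner_add_right[OF L0c H UVc])
  moreover have "nuc_norm L0 \<le> frob_inner (U * transpose_mat V) L0"
    using frob_inner_svd_factor[OF U UU V VV Sig(1,2)] nuc_norm_reduced_svd_le[OF U UU V VV Sig]
    by (simp add: L0_def)
  ultimately show ?thesis
    using dual frob_inner_add_left[OF UVc Yc, of "L0 + H"] by (simp add: L0_def X_def)
qed

lemma abs_add_ge_sgn:
  fixes s k :: real
  shows "\<bar>s\<bar> + sgn s * k \<le> \<bar>s + k\<bar>"
  by (cases "s > 0"; cases "s < 0") (auto simp: sgn_if abs_if)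

lemma l1_norm_subgradient:
  assumes S0: "S0 \<in> carrier_mat n m" and K: "K \<in> carrier_mat n m"
    and E: "\<And>i j. i < n \<Longrightarrow> j < m \<Longrightarrow> (i,j) \<in> E \<Longrightarrow> S0 $$ (i,j) = 0"
  shows "l1_norm S0 + frob_inner (sgn_mat S0) K + l1_norm (proj_idx E K) \<le> l1_norm (S0 + K)"
proof -
  have "l1_norm S0 + frob_inner (sgn_mat S0) K + l1_norm (proj_idx E K)
      = (\<Sum>i<n. \<Sum>j<m. \<bar>S0 $$ (i,j)\<bar> + sgn (S0 $$ (i,j)) * K $$ (i,j)
          + (if (i,j) \<in> E then \<bar>K $$ (i,j)\<bar> else 0))"
    using S0 K by (simp add: l1_norm_def frob_inner_def sgn_mat_def proj_idx_def sum.distrib if_distrib[of abs])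
  also have "\<dots> \<le> (\<Sum>i<n. \<Sum>j<m. \<bar>(S0 + K) $$ (i,j)\<bar>)"
  proof (intro sum_mono)
    fix i j assume "i \<in> {..<n}" "j \<in> {..<m}"
    then show "\<bar>S0 $$ (i,j)\<bar> + sgn (S0 $$ (i,j)) * K $$ (i,j) + (if (i,j) \<in> E then \<bar>K $$ (i,j)\<bar> else 0)
        \<le> \<bar>(S0 + K) $$ (i,j)\<bar>"
      using E[of i j] abs_add_ge_sgn[of "S0 $$ (i,j)" "K $$ (i,j)"] S0 K by auto
  qed
  also have "\<dots> = l1_norm (S0 + K)" using S0 K by (simp add: l1_norm_def)
  finally show ?thesis .
qed

lemma l1_norm_proj_idx_Un:
  assumes "A \<inter> B = {}"
  shows "l1_norm (proj_idx (A \<union> B) K) = l1_norm (proj_idx A K) + l1_norm (proj_idx B K)"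
  using assms by (auto simp: l1_norm_def proj_idx_def simp flip: sum.distrib intro!: sum.cong)

lemma frob_inner_le_max_norm_l1_norm:
  assumes F: "F \<in> carrier_mat n m" and K: "K \<in> carrier_mat n m"
    and supp: "\<And>i j. i < n \<Longrightarrow> j < m \<Longrightarrow> (i,j) \<notin> E \<Longrightarrow> F $$ (i,j) = 0"
  shows "frob_inner F K \<le> max_norm F * l1_norm (proj_idx E K)"
proof -
  have "frob_inner F K = (\<Sum>i<n. \<Sum>j<m. F $$ (i,j) * K $$ (i,j))" by (rule frob_inner_sum[OF F])
  also have "\<dots> \<le> (\<Sum>i<n. \<Sum>j<m. max_norm F * (if (i,j) \<in> E then \<bar>K $$ (i,j)\<bar> else 0))"
  proof (intro sum_mono)
    fix i j assume "i \<in> {..<n}" "j \<in> {..<m}"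
    hence ij: "i < n" "j < m" by auto
    have "F $$ (i,j) * K $$ (i,j) \<le> \<bar>F $$ (i,j)\<bar> * \<bar>K $$ (i,j)\<bar>"
      by (metis abs_ge_self abs_mult)
    also have "\<dots> \<le> max_norm F * \<bar>K $$ (i,j)\<bar>"
      by (rule mult_right_mono[OF abs_index_le_max_norm[OF F ij]]) simp
    finally show "F $$ (i,j) * K $$ (i,j) \<le> max_norm F * (if (i,j) \<in> E then \<bar>K $$ (i,j)\<bar> else 0)"
      using supp[OF ij] by auto
  qed
  also have "\<dots> = max_norm F * l1_norm (proj_idx E K)"
    using K by (simp add: l1_norm_def proj_idx_def sum_distrib_left if_distrib)
  finally show ?thesis .
qed

lemma frob_inner_eq_neg_on_support:
  assumes A: "A \<in> carrier_mat n n" and H: "H \<in> carrier_mat n n" and K: "K \<in> carrier_mat n n"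
    and Az: "\<And>i j. i < n \<Longrightarrow> j < n \<Longrightarrow> (i,j) \<notin> Ob \<Longrightarrow> A $$ (i,j) = 0"
    and HK: "\<And>i j. i < n \<Longrightarrow> j < n \<Longrightarrow> (i,j) \<in> Ob \<Longrightarrow> H $$ (i,j) + K $$ (i,j) = 0"
  shows "frob_inner A H = - frob_inner A K"
proof -
  have "frob_inner A H = (\<Sum>i<n. \<Sum>j<n. A $$ (i,j) * H $$ (i,j))" by (rule frob_inner_sum[OF A])
  also have "\<dots> = (\<Sum>i<n. \<Sum>j<n. - (A $$ (i,j) * K $$ (i,j)))"
  proof (intro sum.cong refl)
    fix i j assume "i \<in> {..<n}" "j \<in> {..<n}"
    hence ij: "i < n" "j < n" by auto
    show "A $$ (i,j) * H $$ (i,j) = - (A $$ (i,j) * K $$ (i,j))"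
    proof (cases "(i,j) \<in> Ob")
      case True
      hence "H $$ (i,j) = - K $$ (i,j)" using HK[OF ij] by (simp add: eq_neg_iff_add_eq_0)
      thus ?thesis by simp
    next
      case False thus ?thesis using Az[OF ij] by simp
    qed
  qed
  also have "\<dots> = - frob_inner A K" by (simp add: frob_inner_sum[OF A] sum_negf)
  finally show ?thesis .
qed

lemma l1_norm_proj_idx_uminus_on:
  assumes H: "H \<in> carrier_mat n m" and K: "K \<in> carrier_mat n m"
    and HK: "\<And>i j. i < n \<Longrightarrow> j < m \<Longrightarrow> (i,j) \<in> E \<Longrightarrow> H $$ (i,j) + K $$ (i,j) = 0"
  shows "l1_norm (proj_idx E H) = l1_norm (proj_idx E K)"
proof -
  have "\<And>i j. i < n \<Longrightarrow> j < m \<Longrightarrow> (i,j) \<in> E \<Longrightarrow> \<bar>H $$ (i,j)\<bar> = \<bar>K $$ (i,j)\<bar>"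
    using HK by (metis abs_minus_cancel add_eq_0_iff2)
  thus ?thesis using H K by (auto simp: l1_norm_def proj_idx_def intro!: sum.cong)
qed

lemma index_eq_0_of_l1_norm_proj_idx:
  assumes K: "K \<in> carrier_mat n m" and l1: "l1_norm (proj_idx E K) = 0"
    and ij: "i < n" "j < m" "(i,j) \<in> E"
  shows "K $$ (i,j) = 0"
proof -
  have KE: "proj_idx E K \<in> carrier_mat n m" using K by (simp add: proj_idx_def)
  have "\<forall>i\<in>{..<n}. \<forall>j\<in>{..<m}. \<bar>proj_idx E K $$ (i,j)\<bar> = 0"
    using l1 KE by (simp add: l1_norm_def sum_nonneg sum_nonneg_eq_0_iff)
  thus ?thesis using ij K by (force simp: proj_idx_def)
qed

section \<open>The dual certificate\<close>

lemma frob_inner_le_spec_norm_compl_part: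
  assumes U: "U \<in> carrier_mat n r" and V: "V \<in> carrier_mat n r"
    and W: "W \<in> carrier_mat n n" "tangent_proj n U V W = 0\<^sub>m n n" and H: "H \<in> carrier_mat n n"
  shows "frob_inner W H \<le> spec_norm W * nuc_norm (compl_proj n U * H * compl_proj n V)"
proof -
  have "W = W - tangent_proj n U V W" using W by (intro eq_matI) auto
  hence "W = compl_proj n U * W * compl_proj n V" using diff_tangent_proj[OF U V W(1)] by simp
  hence "frob_inner W H = frob_inner W (compl_proj n U * H * compl_proj n V)"
    using frob_inner_compl_proj_sandwich[OF U V W(1) H] by metis
  also have "\<dots> \<le> spec_norm W * nuc_norm (compl_proj n U * H * compl_proj n V)"
    using frob_inner_le_spec_norm_nuc_norm[OF compl_proj_sandwich_carrier[OF U V H] W(1)] by simp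
  finally show ?thesis .
qed

lemma frob_inner_tangent_space_le:
  assumes U: "U \<in> carrier_mat n r" and UU: "transpose_mat U * U = 1\<^sub>m r"
    and V: "V \<in> carrier_mat n r" and VV: "transpose_mat V * V = 1\<^sub>m r"
    and G: "G \<in> tangent_space n r U V" and H: "H \<in> carrier_mat n n"
  shows "frob_inner G H \<le> frob_norm G * frob_norm (tangent_proj n U V H)"
proof -
  have Gc: "G \<in> carrier_mat n n" by (rule tangent_space_carrier[OF U V G])
  have Tc: "tangent_proj n U V H \<in> carrier_mat n n" by (rule tangent_proj_carrier[OF U V H])
  have Xc: "compl_proj n U * H * compl_proj n V \<in> carrier_mat n n"
    by (rule compl_proj_sandwich_carrier[OF U V H])
  have "H = tangent_proj n U V H + compl_proj n U * H * compl_proj n V"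
    using H Xc by (intro eq_matI) (auto simp: tangent_proj_def)
  hence "frob_inner G H = frob_inner G (tangent_proj n U V H)
      + frob_inner G (compl_proj n U * H * compl_proj n V)"
    using frob_inner_add_right[OF Tc Xc Gc] by metis
  moreover have "frob_inner G (compl_proj n U * H * compl_proj n V) = 0"
    using frob_inner_compl_tangent_space[OF U UU V VV H G] frob_inner_commute[OF Gc Xc] by simp
  moreover have "frob_inner G (tangent_proj n U V H) \<le> frob_norm G * frob_norm (tangent_proj n U V H)"
    using frob_inner_cauchy_schwarz[OF Gc Tc] by simp
  ultimately show ?thesis by simp
qed

lemma frob_norm_tangent_proj_bound:
  assumes U: "U \<in> carrier_mat n r" and UU: "transpose_mat U * U = 1\<^sub>m r"
    and V: "V \<in> carrier_mat n r" and VV: "transpose_mat V * V = 1\<^sub>m r"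
    and H: "H \<in> carrier_mat n n" and c: "c \<ge> 0"
    and PT: "frob_norm (tangent_proj n U V (H - proj_idx E H))
      \<le> c * frob_norm ((H - proj_idx E H) - tangent_proj n U V (H - proj_idx E H))"
  shows "frob_norm (tangent_proj n U V H)
    \<le> c * (frob_norm (compl_proj n U * H * compl_proj n V) + frob_norm (proj_idx E H))
      + frob_norm (proj_idx E H)"
proof -
  define HE where "HE = proj_idx E H"
  define H' where "H' = H - HE"
  have HEc: "HE \<in> carrier_mat n n" using H by (simp add: HE_def proj_idx_def)
  have H'c: "H' \<in> carrier_mat n n" unfolding H'_def by (rule minus_carrier_mat[OF HEc])
  have "H' - tangent_proj n U V H'
      = compl_proj n U * H * compl_proj n V - compl_proj n U * HE * compl_proj n V"
    using diff_tangent_proj[OF U V H'c] compl_proj_sandwich_diff[OF U V H HEc] by (simp add: H'_def)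
  hence "frob_norm (H' - tangent_proj n U V H')
      \<le> frob_norm (compl_proj n U * H * compl_proj n V) + frob_norm (compl_proj n U * HE * compl_proj n V)"
    using frob_norm_diff_le compl_proj_sandwich_carrier[OF U V H] compl_proj_sandwich_carrier[OF U V HEc]
    by metis
  also have "frob_norm (compl_proj n U * HE * compl_proj n V) \<le> frob_norm HE"
    by (rule frob_norm_proj_le(2)[OF U UU V VV HEc])
  finally have compl: "frob_norm (H' - tangent_proj n U V H')
      \<le> frob_norm (compl_proj n U * H * compl_proj n V) + frob_norm HE" by simp
  have "tangent_proj n U V H = tangent_proj n U V H' + tangent_proj n U V HE"
    using tangent_proj_diff[OF U V H HEc] tangent_proj_carrier[OF U V H] tangent_proj_carrier[OF U V HEc]
    by (intro eq_matI) (auto simp: H'_def)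
  hence "frob_norm (tangent_proj n U V H) \<le> frob_norm (tangent_proj n U V H') + frob_norm (tangent_proj n U V HE)"
    using frob_norm_triangle tangent_proj_carrier[OF U V H'c] tangent_proj_carrier[OF U V HEc] by metis
  also have "\<dots> \<le> c * (frob_norm (compl_proj n U * H * compl_proj n V) + frob_norm HE) + frob_norm HE"
    using PT mult_left_mono[OF compl c] frob_norm_proj_le(1)[OF U UU V VV HEc]
    by (simp add: H'_def HE_def)
  finally show ?thesis by (simp add: HE_def)
qed

text \<open>For \<open>n = 1\<close> the estimate cannot come from the factor \<open>1/n\<close>; instead one of \<open>T\<close>
  and \<open>T\<^sup>\<bottom>\<close> is trivial.\<close>

lemma frob_inner_small_tangent_le:
  assumes U: "U \<in> carrier_mat n r" and UU: "transpose_mat U * U = 1\<^sub>m r"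
    and V: "V \<in> carrier_mat n r" and VV: "transpose_mat V * V = 1\<^sub>m r"
    and n: "0 < n" and H: "H \<in> carrier_mat n n"
    and G: "G \<in> tangent_space n r U V" "frob_norm G \<le> 1 / (real n)\<^sup>2"
    and PT: "frob_norm (tangent_proj n U V (H - proj_idx E H))
      \<le> real n * frob_norm ((H - proj_idx E H) - tangent_proj n U V (H - proj_idx E H))"
  shows "frob_inner G H
    \<le> nuc_norm (compl_proj n U * H * compl_proj n V) / 2 + 2 / real n * frob_norm (proj_idx E H)"
proof -
  define X where "X = compl_proj n U * H * compl_proj n V"
  define f where "f = frob_norm (proj_idx E H)"
  have Xc: "X \<in> carrier_mat n n" using compl_proj_sandwich_carrier[OF U V H] by (simp add: X_def)
  have N0: "nuc_norm X \<ge> 0" by (rule nuc_norm_nonneg[OF Xc])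
  have f0: "f \<ge> 0" by (simp add: f_def frob_norm_nonneg)
  have T: "frob_norm (tangent_proj n U V H) \<le> real n * (frob_norm X + f) + f"
    using frob_norm_tangent_proj_bound[OF U UU V VV H _ PT] by (simp add: X_def f_def)
  have "frob_inner G H \<le> frob_norm G * frob_norm (tangent_proj n U V H)"
    by (rule frob_inner_tangent_space_le[OF U UU V VV G(1) H])
  also have "\<dots> \<le> 1 / (real n)\<^sup>2 * frob_norm (tangent_proj n U V H)"
    using G(2) by (intro mult_right_mono) (auto simp: frob_norm_nonneg)
  also have "\<dots> \<le> nuc_norm X / 2 + 2 / real n * f"
  proof (cases "n \<ge> 2")
    case True
    hence n2: "real n \<ge> 2" by simp
    have "1 / (real n)\<^sup>2 * frob_norm (tangent_proj n U V H) \<le> 1 / (real n)\<^sup>2 * (real n * (frob_norm X + f) + f)"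
      using T by (intro mult_left_mono) auto
    also have "\<dots> = frob_norm X / real n + f / real n + f / (real n)\<^sup>2"
      using n by (simp add: field_simps power2_eq_square)
    also have "\<dots> \<le> nuc_norm X / 2 + 2 / real n * f"
    proof -
      have "frob_norm X / real n \<le> frob_norm X / 2"
        using n2 frob_norm_nonneg[of X] by (intro divide_left_mono) auto
      moreover have "f / (real n)\<^sup>2 \<le> f / real n"
        using n2 f0 by (intro divide_left_mono) (auto simp: power2_eq_square)
      moreover have "2 / real n * f = 2 * (f / real n)" by simp
      ultimately show ?thesis using frob_norm_le_nuc_norm[OF Xc] by linarith
    qed
    finally show ?thesis .
  next
    case False
    hence n1: "n = 1" using n by simp
    from tangent_proj_dim_1[of U r V H] U UU V H n1
    consider "tangent_proj n U V H = 0\<^sub>m n n" | "X = 0\<^sub>m n n" by (auto simp: X_def)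
    thus ?thesis
    proof cases
      case 1
      thus ?thesis using N0 f0 n by (simp add: frob_norm_def frob_inner_def)
    next
      case 2
      hence "frob_norm X = 0" by (simp add: frob_norm_def frob_inner_def)
      thus ?thesis using T n1 N0 f0 by simp
    qed
  qed
  finally show ?thesis by (simp add: X_def f_def)
qed

lemma certificate_cost_gap:
  assumes U: "U \<in> carrier_mat n r" and UU: "transpose_mat U * U = 1\<^sub>m r"
    and V: "V \<in> carrier_mat n r" and VV: "transpose_mat V * V = 1\<^sub>m r"
    and Sig: "Sig \<in> carrier_mat r r" "diagonal_mat Sig" "\<forall>i<r. Sig $$ (i,i) \<ge> 0"
    and S0: "S0 \<in> carrier_mat n n" "\<And>i j. i < n \<Longrightarrow> j < n \<Longrightarrow> (i,j) \<notin> Om \<Longrightarrow> S0 $$ (i,j) = 0"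
    and Om: "Om \<subseteq> Omobs" and Gam: "Gam \<subseteq> Omobs" "Gam \<inter> Om = {}"
    and W: "W \<in> carrier_mat n n" "tangent_proj n U V W = 0\<^sub>m n n"
    and F: "F \<in> carrier_mat n n" "\<And>i j. i < n \<Longrightarrow> j < n \<Longrightarrow> (i,j) \<notin> Gam \<Longrightarrow> F $$ (i,j) = 0"
    and G: "G \<in> carrier_mat n n"
    and cert: "U * transpose_mat V + W + G = lam \<cdot>\<^sub>m (sgn_mat S0 + F)" and lam: "lam \<ge> 0"
    and H: "H \<in> carrier_mat n n" and K: "K \<in> carrier_mat n n"
    and HK: "\<And>i j. i < n \<Longrightarrow> j < n \<Longrightarrow> (i,j) \<in> Omobs \<Longrightarrow> H $$ (i,j) + K $$ (i,j) = 0"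
  shows "nuc_norm (U * Sig * transpose_mat V) + lam * l1_norm S0
      + (1 - spec_norm W) * nuc_norm (compl_proj n U * H * compl_proj n V)
      + lam * (1 - max_norm F) * l1_norm (proj_idx Gam K) + lam * l1_norm (proj_idx (- Omobs) K)
      - frob_inner G H
    \<le> nuc_norm (U * Sig * transpose_mat V + H) + lam * l1_norm (S0 + K)"
proof -
  define N where "N = nuc_norm (compl_proj n U * H * compl_proj n V)"
  define a where "a = l1_norm (proj_idx Gam K)"
  define b where "b = l1_norm (proj_idx (- Omobs) K)"
  have UVc: "U * transpose_mat V \<in> carrier_mat n n" using U V by simp
  have sgnc: "sgn_mat S0 \<in> carrier_mat n n" using S0 by (simp add: sgn_mat_def)
  have nuc: "nuc_norm (U * Sig * transpose_mat V) + frob_inner (U * transpose_mat V) H + N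
      \<le> nuc_norm (U * Sig * transpose_mat V + H)"
    using nuc_norm_subgradient[OF U UU V VV Sig H] by (simp add: N_def)
  have "l1_norm S0 + frob_inner (sgn_mat S0) K + l1_norm (proj_idx (Gam \<union> - Omobs) K) \<le> l1_norm (S0 + K)"
    by (rule l1_norm_subgradient[OF S0(1) K]) (use S0(2) Om Gam in blast)
  moreover have "l1_norm (proj_idx (Gam \<union> - Omobs) K) = a + b"
    using l1_norm_proj_idx_Un[of Gam "- Omobs" K] Gam by (auto simp: a_def b_def)
  ultimately have l1: "lam * (l1_norm S0 + frob_inner (sgn_mat S0) K + a + b) \<le> lam * l1_norm (S0 + K)"
    using lam by (intro mult_left_mono) auto
  have "frob_inner (U * transpose_mat V + W + G) H = frob_inner (lam \<cdot>\<^sub>m (sgn_mat S0 + F)) H"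
    using cert by simp
  hence "frob_inner (U * transpose_mat V) H + frob_inner W H + frob_inner G H
      = lam * (frob_inner (sgn_mat S0) H + frob_inner F H)"
    using UVc W F G sgnc by (simp add: frob_inner_add_left[of _ n n] frob_inner_smult_left[of _ n n])
  moreover have "sgn_mat S0 $$ (i,j) = 0" if "i < n" "j < n" "(i,j) \<notin> Omobs" for i j
  proof -
    have "(i,j) \<notin> Om" using Om that(3) by blast
    thus ?thesis using S0 that by (simp add: sgn_mat_def)
  qed
  hence "frob_inner (sgn_mat S0) H = - frob_inner (sgn_mat S0) K"
    by (rule frob_inner_eq_neg_on_support[OF sgnc H K _ HK])
  moreover have "frob_inner F H = - frob_inner F K"
    by (rule frob_inner_eq_neg_on_support[OF F(1) H K _ HK]) (use F(2) Gam in auto)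
  moreover have "lam * frob_inner F K \<le> lam * (max_norm F * a)"
    using frob_inner_le_max_norm_l1_norm[OF F(1) K F(2)] lam by (simp add: a_def mult_left_mono)
  moreover have "frob_inner W H \<le> spec_norm W * N"
    using frob_inner_le_spec_norm_compl_part[OF U V W H] by (simp add: N_def)
  ultimately show ?thesis
    using nuc l1 unfolding N_def[symmetric] a_def[symmetric] b_def[symmetric] by (simp add: algebra_simps)
qed

lemma certificate_perturbation_eq_0:
  assumes U: "U \<in> carrier_mat n r" and UU: "transpose_mat U * U = 1\<^sub>m r"
    and V: "V \<in> carrier_mat n r" and VV: "transpose_mat V * V = 1\<^sub>m r"
    and Sig: "Sig \<in> carrier_mat r r" "diagonal_mat Sig" "\<forall>i<r. Sig $$ (i,i) \<ge> 0"
    and S0: "S0 \<in> carrier_mat n n" "\<And>i j. i < n \<Longrightarrow> j < n \<Longrightarrow> (i,j) \<notin> Om \<Longrightarrow> S0 $$ (i,j) = 0"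
    and Om: "Om \<subseteq> Omobs" and Gam: "Gam \<subseteq> Omobs" "Gam \<inter> Om = {}"
    and W: "W \<in> carrier_mat n n" "tangent_proj n U V W = 0\<^sub>m n n" "spec_norm W < 1/2"
    and F: "F \<in> carrier_mat n n" "\<And>i j. i < n \<Longrightarrow> j < n \<Longrightarrow> (i,j) \<notin> Gam \<Longrightarrow> F $$ (i,j) = 0"
      "max_norm F < 1/2"
    and G: "G \<in> tangent_space n r U V" "frob_norm G \<le> 1 / (real n)\<^sup>2"
    and cert: "U * transpose_mat V + W + G = lam \<cdot>\<^sub>m (sgn_mat S0 + F)"
    and n: "0 < n" and lam: "lam > 4 / real n"
    and H: "H \<in> carrier_mat n n" and K: "K \<in> carrier_mat n n"
    and HK: "\<And>i j. i < n \<Longrightarrow> j < n \<Longrightarrow> (i,j) \<in> Omobs \<Longrightarrow> H $$ (i,j) + K $$ (i,j) = 0"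
    and PT: "frob_norm (tangent_proj n U V (H - proj_idx Gam H))
      \<le> real n * frob_norm ((H - proj_idx Gam H) - tangent_proj n U V (H - proj_idx Gam H))"
    and cost: "nuc_norm (U * Sig * transpose_mat V + H) + lam * l1_norm (S0 + K)
      \<le> nuc_norm (U * Sig * transpose_mat V) + lam * l1_norm S0"
  shows "H = 0\<^sub>m n n \<and> K = 0\<^sub>m n n"
proof -
  define X where "X = compl_proj n U * H * compl_proj n V"
  define a where "a = l1_norm (proj_idx Gam K)"
  define b where "b = l1_norm (proj_idx (- Omobs) K)"
  have Xc: "X \<in> carrier_mat n n" using compl_proj_sandwich_carrier[OF U V H] by (simp add: X_def)
  have Gc: "G \<in> carrier_mat n n" by (rule tangent_space_carrier[OF U V G(1)])
  have lam0: "lam > 0" using lam n by (smt (verit) divide_pos_pos of_nat_0_less_iff)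
  have "l1_norm (proj_idx Gam H) = a"
    unfolding a_def by (rule l1_norm_proj_idx_uminus_on[OF H K]) (use HK Gam in blast)
  hence HGam: "frob_norm (proj_idx Gam H) \<le> a"
    using frob_norm_le_l1_norm[of "proj_idx Gam H" n n] H by (simp add: proj_idx_def)
  have "2 / real n * frob_norm (proj_idx Gam H) \<le> 2 / real n * a"
    using HGam by (intro mult_left_mono) auto
  hence "- frob_inner G H \<ge> - (nuc_norm X / 2 + 2 / real n * a)"
    using frob_inner_small_tangent_le[OF U UU V VV n H G PT] by (simp add: X_def)
  moreover have "(1/2 - spec_norm W) * nuc_norm X + (lam * (1 - max_norm F) - 2 / real n) * a + lam * b
      = ((1 - spec_norm W) * nuc_norm X + lam * (1 - max_norm F) * a + lam * b)
        - (nuc_norm X / 2 + 2 / real n * a)"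
    by (simp add: algebra_simps)
  ultimately have "(1/2 - spec_norm W) * nuc_norm X + (lam * (1 - max_norm F) - 2 / real n) * a + lam * b \<le> 0"
    using certificate_cost_gap[OF U UU V VV Sig S0 Om Gam W(1,2) F(1,2) Gc cert less_imp_le[OF lam0] H K HK] cost
    unfolding X_def a_def b_def by linarith
  moreover have "nuc_norm X \<ge> 0" "a \<ge> 0" "b \<ge> 0"
    using nuc_norm_nonneg[OF Xc] by (auto simp: a_def b_def l1_norm_def sum_nonneg)
  moreover have "lam * (1 - max_norm F) - 2 / real n > 0"
  proof -
    have "lam / 2 < lam * (1 - max_norm F)" using F(3) lam0 by simp
    thus ?thesis using lam by (simp add: field_simps)
  qed
  ultimately have N0: "nuc_norm X = 0" and a0: "a = 0" and b0: "b = 0"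
    using W(3) lam0 by (smt (verit) mult_pos_pos mult_nonneg_nonneg)+
  have "X = 0\<^sub>m n n"
    using frob_norm_eq_0[OF Xc] frob_norm_le_nuc_norm[OF Xc] frob_norm_nonneg[of X] N0 by simp
  moreover have "frob_norm X = 0" using \<open>X = 0\<^sub>m n n\<close> by (simp add: frob_norm_def frob_inner_def)
  moreover have "frob_norm (proj_idx Gam H) = 0" using HGam a0 frob_norm_nonneg by (metis order_antisym)
  ultimately have "frob_norm (tangent_proj n U V H) \<le> 0"
    using frob_norm_tangent_proj_bound[OF U UU V VV H _ PT] by (simp add: X_def)
  hence "tangent_proj n U V H = 0\<^sub>m n n"
    using frob_norm_eq_0[OF tangent_proj_carrier[OF U V H]] frob_norm_nonneg by (metis order_antisym)
  moreover have "H = tangent_proj n U V H + X"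
    using H Xc by (intro eq_matI) (auto simp: tangent_proj_def X_def)
  ultimately have H0: "H = 0\<^sub>m n n" using \<open>X = 0\<^sub>m n n\<close> by simp
  have "K $$ (i,j) = 0" if ij: "i < n" "j < n" for i j
  proof (cases "(i,j) \<in> Omobs")
    case True thus ?thesis using HK[OF ij True] H0 ij by simp
  next
    case False thus ?thesis using index_eq_0_of_l1_norm_proj_idx[OF K b0[unfolded b_def]] ij by simp
  qed
  thus ?thesis using H0 K by (auto intro!: eq_matI)
qed

theorem lemma7p2:
  fixes n r :: nat and L0 U V Sig S0' W F D :: "real mat"
    and Omobs Om Gam :: "(nat \<times> nat) set" and lam :: real
  assumes L0: "L0 \<in> carrier_mat n n"
    and U: "U \<in> carrier_mat n r" and V: "V \<in> carrier_mat n r"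
    and UU: "transpose_mat U * U = 1\<^sub>m r" and VV: "transpose_mat V * V = 1\<^sub>m r"
    and Sig_props: "Sig \<in> carrier_mat r r" "diagonal_mat Sig" "\<forall>i<r. Sig $$ (i,i) > 0"
    and svd: "L0 = U * Sig * transpose_mat V"
    and obs: "Omobs \<subseteq> {0..<n} \<times> {0..<n}"
    and sub: "Om \<subseteq> Omobs"
    and Gam_def: "Gam = Omobs - Om"
    and S0: "S0' \<in> carrier_mat n n" "\<forall>i<n. \<forall>j<n. (i,j) \<notin> Om \<longrightarrow> S0' $$ (i,j) = 0"
    and PT: "\<And>M. M \<in> carrier_mat n n \<Longrightarrow>
        frob_norm (orth_proj n (tangent_space n r U V) (M - proj_idx Gam M))
        \<le> real n * frob_norm ((M - proj_idx Gam M)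
              - orth_proj n (tangent_space n r U V) (M - proj_idx Gam M))"
    and lam_gt: "lam > 4 / real n"
    and WFD: "W \<in> carrier_mat n n" "F \<in> carrier_mat n n" "D \<in> carrier_mat n n"
    and eq: "U * transpose_mat V + W + orth_proj n (tangent_space n r U V) D
             = lam \<cdot>\<^sub>m (sgn_mat S0' + F)"
    and W0: "orth_proj n (tangent_space n r U V) W = 0\<^sub>m n n"
    and Wn: "spec_norm W < 1/2"
    and F0: "F - proj_idx Gam F = 0\<^sub>m n n"
    and Fn: "max_norm F < 1/2"
    and Dn: "frob_norm (orth_proj n (tangent_space n r U V) D) \<le> 1 / (real n)^2"
  shows "proj_idx Omobs (L0 + S0') = proj_idx Omobs L0 + S0'
    \<and> (\<forall>L S. L \<in> carrier_mat n n \<and> S \<in> carrier_mat n n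
          \<and> proj_idx Omobs (L + S) = proj_idx Omobs L0 + S0'
          \<and> nuc_norm L + lam * l1_norm S \<le> nuc_norm L0 + lam * l1_norm S0'
          \<longrightarrow> L = L0 \<and> S = S0')"
proof -
  let ?T = "tangent_space n r U V"
  have feas: "proj_idx Omobs (L0 + S0') = proj_idx Omobs L0 + S0'"
    using L0 S0 sub by (intro eq_matI) (auto simp: proj_idx_def)
  have Sig0: "\<forall>i<r. Sig $$ (i,i) \<ge> 0" using Sig_props(3) by (simp add: less_imp_le)
  have S0z: "\<And>i j. i < n \<Longrightarrow> j < n \<Longrightarrow> (i,j) \<notin> Om \<Longrightarrow> S0' $$ (i,j) = 0" using S0(2) by blast
  have Gam: "Gam \<subseteq> Omobs" "Gam \<inter> Om = {}" using Gam_def by auto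
  have PW: "tangent_proj n U V W = 0\<^sub>m n n" using W0 orth_proj_tangent_space[OF U UU V VV WFD(1)] by simp
  have Fz: "F $$ (i,j) = 0" if "i < n" "j < n" "(i,j) \<notin> Gam" for i j
    using arg_cong[OF F0, of "\<lambda>A. A $$ (i,j)"] WFD(2) that by (simp add: proj_idx_def)
  have PD: "orth_proj n ?T D \<in> ?T"
    using orth_proj_tangent_space[OF U UU V VV WFD(3)] tangent_proj_in_tangent_space[OF U V WFD(3)] by simp
  have "L = L0 \<and> S = S0'"
    if L: "L \<in> carrier_mat n n" and S: "S \<in> carrier_mat n n"
      and cons: "proj_idx Omobs (L + S) = proj_idx Omobs L0 + S0'"
      and cost: "nuc_norm L + lam * l1_norm S \<le> nuc_norm L0 + lam * l1_norm S0'" for L S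
  proof (cases "n = 0")
    case True thus ?thesis using L S L0 S0 by (auto intro!: eq_matI)
  next
    case False
    define H K where "H = L - L0" and "K = S - S0'"
    have Hc: "H \<in> carrier_mat n n" and Kc: "K \<in> carrier_mat n n" using L0 S0 by (auto simp: H_def K_def)
    have LH: "L = U * Sig * transpose_mat V + H" and SK: "S = S0' + K"
      using L S L0 S0 svd by (auto intro!: eq_matI simp: H_def K_def)
    have HK: "H $$ (i,j) + K $$ (i,j) = 0" if "i < n" "j < n" "(i,j) \<in> Omobs" for i j
      using arg_cong[OF cons, of "\<lambda>A. A $$ (i,j)"] L S L0 S0 that by (simp add: proj_idx_def H_def K_def)
    have "H - proj_idx Gam H \<in> carrier_mat n n" by (rule minus_carrier_mat) (use Hc in \<open>simp add: proj_idx_def\<close>)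
    hence PTH: "frob_norm (tangent_proj n U V (H - proj_idx Gam H))
        \<le> real n * frob_norm ((H - proj_idx Gam H) - tangent_proj n U V (H - proj_idx Gam H))"
      using PT[OF Hc] orth_proj_tangent_space[OF U UU V VV] by simp
    have "H = 0\<^sub>m n n \<and> K = 0\<^sub>m n n"
      by (rule certificate_perturbation_eq_0[OF U UU V VV Sig_props(1,2) Sig0 S0(1) S0z sub Gam
          WFD(1) PW Wn WFD(2) Fz Fn PD Dn eq _ lam_gt Hc Kc HK PTH])
        (use False cost LH SK svd in simp_all)
    thus ?thesis using LH SK L0 S0 svd by simp
  qed
  with feas show ?thesis by blast
qed

end
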